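(* Let $(\mathbb X,\|\cdot\|)$ be a uniformly smooth Banach space over $\mathbb K$, $\mathcal D=\{\phi_i\}_{i\in\mathcal I}$ a dictionary in $\mathbb X$, $\tau\in(0,1]$, and $(\mathcal G_n)_{n\ge1}$ a $\tau$-WCGA associated with $(\mathbb X,\|\cdot\|,\mathcal D)$. Let $D>N\ge1$ be integers, let $k_N>0$, let $Q:[0,\infty)\to[0,\infty)$ be increasing, positive on $(0,\infty)$ with $Q(0)=0$, and let $(H(n))_{n\ge1}$ be a positive increasing sequence, such that: (i) $(\mathbb X,\|\cdot\|,\mathcal D)$ satisfies property $\mathcal D(Q)$; (ii) $\Sigma_N(\mathcal D)$ satisfies property $A_1(k_N,D)$; (iii) $\Sigma_N(\mathcal D)$ satisfies property $A_3(H,D)$. Let $\lambda_1>1$ and assume that the sequence $$G(n)=\Big[Q\Big(\frac{c(\tau)}{H(n)}\Big)\Big]^{-1},\qquad c(\tau)=\frac\tau2\Big(1-\frac1{\sqrt{\lambda_1}}\Big),\qquad n\ge1,$$ is 1-quasi-convex. Define $$\varphi(N):=8\,\ln\Big[\frac{8(1+\lambda_1)k_N}{\sqrt{\lambda_1}-1}\Big]\,G(2N).$$ If $N+\varphi(N)<D$, then $$\big\|x-\mathcal G_{\lfloor\varphi(N)\rfloor}(x)\big\|\le\lambda_1\,\|x-\Phi\|\qquad\text{for all }x\in\mathbb X,\ \Phi\in\Sigma_N(\mathcal D).$$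
   Context: $\mathbb K=\mathbb R$ or $\mathbb C$. For $f\in\mathbb X\setminus\{0\}$, $F_f\in\mathbb X^*$ denotes the (unique, by smoothness) norming functional: $\|F_f\|_{\mathbb X^*}=1$, $F_f(f)=\|f\|$. A dictionary is a family $\mathcal D=\{\phi_i\}_{i\in\mathcal I}$ of nonzero vectors whose closed linear span is $\mathbb X$. $\Sigma_N(\mathcal D)$ is the set of all linear combinations of at most $N$ elements of $\mathcal D$; $[\,\cdot\,]$ denotes linear span; $\sigma_N(f)=\mathrm{dist}(f,\Sigma_N(\mathcal D))$. $\tau$-WCGA: maps $\mathcal G_n:\mathbb X\to\Sigma_n(\mathcal D)$ defined as follows. For $f\ne0$ set $f_0=f$; at step $n+1$ choose any $\phi_{i_{n+1}}\in\mathcal D$ with $|F_{f_n}(\phi_{i_{n+1}})|\ge\tau\sup_{\phi\in\mathcal D}|F_{f_n}(\phi)|$, let $\mathcal G_{n+1}(f)$ be any element of $[\phi_{i_1},\dots,\phi_{i_{n+1}}]$ with $\|f-\mathcal G_{n+1}(f)\|=\mathrm{dist}(f,[\phi_{i_1},\dots,\phi_{i_{n+1}}])$, and set $f_{n+1}=f-\mathcal G_{n+1}(f)$. If $f_n=0$ at some stage, set $\mathcal G_{n+k}(f)=f$ for all $k\ge1$ (and $\mathcal G_n(0)=0$). Property $\mathcal D(Q)$: $\mathrm{dist}(f,[\phi])\le\|f\|\,(1-Q(|F_f(\phi)|))$ for all $\phi\in\mathcal D$, $f\in\mathbb X\setminus\{0\}$. Property $A_1(k_N,D)$ of $\Sigma_N$: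 $\|\sum_{j\in A}a_j\phi_j\|\le k_N\|\sum_{j\in B}a_j\phi_j\|$ for all scalars $a_j$ and all finite $A\subset B\subset\mathcal I$ with $|A|\le N$, $|B|<D$. $A_1(k_N)$ means this holds for all $D<\infty$. Property $A_3(H,D)$ of $\Sigma_N$: $\sum_{j\in A}|a_j|\le H(|A|)\,\|\sum_{j\in B}a_j\phi_j\|$ for all scalars $a_j$ and all finite $A\subset B\subset\mathcal I$ with $|A|\le N$, $|B|<D$. $A_3(H)$ means this holds for all $D<\infty$. A positive sequence $(G(k))_{k\ge1}$ is 1-quasi-convex if $G(k)/k\le G(k+1)/(k+1)$ for all $k\in\mathbb N$. *)

theory Defs
  imports "HOL-Analysis.Analysis"
begin

text \<open>Scalars: the field K is represented by a type 'k of class real_normed_field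
(instantiated to real or complex), acting on the real Banach space 'a through an
explicit scalar multiplication sm, which must extend the real scaling and be
norm-homogeneous.  For K = R we take sm = scaleR.\<close>

definition normed_space_over :: "('k::real_normed_field \<Rightarrow> 'a::real_normed_vector \<Rightarrow> 'a) \<Rightarrow> bool" where
  "normed_space_over sm \<longleftrightarrow>
     (\<forall>c x y. sm c (x + y) = sm c x + sm c y) \<and>
     (\<forall>c d x. sm (c + d) x = sm c x + sm d x) \<and>
     (\<forall>c d x. sm (c * d) x = sm c (sm d x)) \<and>
     (\<forall>x. sm 1 x = x) \<and>
     (\<forall>r x. sm (of_real r) x = scaleR r x) \<and>
     (\<forall>c x. norm (sm c x) = norm c * norm x)"

definition kspan :: "('k::real_normed_field \<Rightarrow> 'a::real_normed_vector \<Rightarrow> 'a) \<Rightarrow> 'a set \<Rightarrow> 'a set" where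
  "kspan sm S = {x. \<exists>A c. finite A \<and> A \<subseteq> S \<and> x = (\<Sum>v\<in>A. sm (c v) v)}"

definition kfunctional :: "('k::real_normed_field \<Rightarrow> 'a::real_normed_vector \<Rightarrow> 'a) \<Rightarrow> ('a \<Rightarrow> 'k) \<Rightarrow> bool" where
  "kfunctional sm F \<longleftrightarrow>
     (\<forall>x y. F (x + y) = F x + F y) \<and> (\<forall>c x. F (sm c x) = c * F x) \<and>
     (\<exists>B. \<forall>x. norm (F x) \<le> B * norm x)"

definition dual_norm :: "('a::real_normed_vector \<Rightarrow> 'k::real_normed_field) \<Rightarrow> real" where
  "dual_norm F = (SUP x\<in>{x. norm x \<le> 1}. norm (F x))"

definition norming :: "('k::real_normed_field \<Rightarrow> 'a::real_normed_vector \<Rightarrow> 'a) \<Rightarrow> 'a \<Rightarrow> ('a \<Rightarrow> 'k) \<Rightarrow> bool" where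
  "norming sm f F \<longleftrightarrow> kfunctional sm F \<and> dual_norm F = 1 \<and> F f = of_real (norm f)"

definition modulus_smoothness :: "'a::real_normed_vector itself \<Rightarrow> real \<Rightarrow> real" where
  "modulus_smoothness (t::'a itself) u =
     (SUP p\<in>{(x::'a, y::'a). norm x = 1 \<and> norm y = 1}.
        (norm (fst p + u *\<^sub>R snd p) + norm (fst p - u *\<^sub>R snd p)) / 2 - 1)"

definition uniformly_smooth :: "'a::real_normed_vector itself \<Rightarrow> bool" where
  "uniformly_smooth (t::'a itself) \<longleftrightarrow>
     ((\<lambda>u. modulus_smoothness t u / u) \<longlongrightarrow> 0) (at_right 0)"

definition dictionary :: "('k::real_normed_field \<Rightarrow> 'a::real_normed_vector \<Rightarrow> 'a) \<Rightarrow> ('i \<Rightarrow> 'a) \<Rightarrow> bool" where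
  "dictionary sm \<phi> \<longleftrightarrow> (\<forall>i. \<phi> i \<noteq> 0) \<and> closure (kspan sm (range \<phi>)) = UNIV"

definition SigmaN :: "('k::real_normed_field \<Rightarrow> 'a::real_normed_vector \<Rightarrow> 'a) \<Rightarrow> ('i \<Rightarrow> 'a) \<Rightarrow> nat \<Rightarrow> 'a set" where
  "SigmaN sm \<phi> N = {x. \<exists>A c. finite A \<and> card A \<le> N \<and> x = (\<Sum>i\<in>A. sm (c i) (\<phi> i))}"

text \<open>tau-WCGA: G n f is the n-th approximant (G 0 f = 0, so f_0 = f).  For every f there
is a sequence of chosen indices ix 1, ix 2, ... realising the algorithm.  The weak greedy
condition |F(phi_{i_{n+1}})| >= tau sup_phi |F(phi)| is written out pointwise (equivalent,
also when the supremum is infinite).\<close>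
definition wcga :: "('k::real_normed_field \<Rightarrow> 'a::real_normed_vector \<Rightarrow> 'a) \<Rightarrow> ('i \<Rightarrow> 'a) \<Rightarrow> real \<Rightarrow> (nat \<Rightarrow> 'a \<Rightarrow> 'a) \<Rightarrow> bool" where
  "wcga sm \<phi> \<tau> G \<longleftrightarrow>
     (\<forall>f. G 0 f = 0 \<and>
       (\<exists>ix :: nat \<Rightarrow> 'i. \<forall>n.
          (f - G n f = 0 \<longrightarrow> G (Suc n) f = f) \<and>
          (f - G n f \<noteq> 0 \<longrightarrow>
             (\<forall>F. norming sm (f - G n f) F \<longrightarrow>
                (\<forall>j. \<tau> * norm (F (\<phi> j)) \<le> norm (F (\<phi> (ix (Suc n)))))) \<and>
             G (Suc n) f \<in> kspan sm ((\<lambda>k. \<phi> (ix k)) ` {1..Suc n}) \<and>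
             norm (f - G (Suc n) f) = infdist f (kspan sm ((\<lambda>k. \<phi> (ix k)) ` {1..Suc n})))))"

definition property_DQ :: "('k::real_normed_field \<Rightarrow> 'a::real_normed_vector \<Rightarrow> 'a) \<Rightarrow> ('i \<Rightarrow> 'a) \<Rightarrow> (real \<Rightarrow> real) \<Rightarrow> bool" where
  "property_DQ sm \<phi> Q \<longleftrightarrow>
     (\<forall>i f F. f \<noteq> 0 \<longrightarrow> norming sm f F \<longrightarrow>
        infdist f (kspan sm {\<phi> i}) \<le> norm f * (1 - Q (norm (F (\<phi> i)))))"

definition property_A1 :: "('k::real_normed_field \<Rightarrow> 'a::real_normed_vector \<Rightarrow> 'a) \<Rightarrow> ('i \<Rightarrow> 'a) \<Rightarrow> nat \<Rightarrow> real \<Rightarrow> nat \<Rightarrow> bool" where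
  "property_A1 sm \<phi> N k D \<longleftrightarrow>
     (\<forall>(a::'i \<Rightarrow> 'k) A B. finite B \<and> A \<subseteq> B \<and> card A \<le> N \<and> card B < D \<longrightarrow>
        norm (\<Sum>j\<in>A. sm (a j) (\<phi> j)) \<le> k * norm (\<Sum>j\<in>B. sm (a j) (\<phi> j)))"

text \<open>Property A_3(H, D) of Sigma_N (A nonempty; the empty case is trivial).\<close>
definition property_A3 :: "('k::real_normed_field \<Rightarrow> 'a::real_normed_vector \<Rightarrow> 'a) \<Rightarrow> ('i \<Rightarrow> 'a) \<Rightarrow> nat \<Rightarrow> (nat \<Rightarrow> real) \<Rightarrow> nat \<Rightarrow> bool" where
  "property_A3 sm \<phi> N H D \<longleftrightarrow>
     (\<forall>(a::'i \<Rightarrow> 'k) A B. finite B \<and> A \<subseteq> B \<and> A \<noteq> {} \<and> card A \<le> N \<and> card B < D \<longrightarrow>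
        (\<Sum>j\<in>A. norm (a j)) \<le> H (card A) * norm (\<Sum>j\<in>B. sm (a j) (\<phi> j)))"

definition quasi_convex1 :: "(nat \<Rightarrow> real) \<Rightarrow> bool" where
  "quasi_convex1 G \<longleftrightarrow> (\<forall>k\<ge>1. G k / real k \<le> G (k + 1) / real (k + 1))"

end

theory Submission
  imports Defs
begin

text \<open>
The residual \<open>r\<^sub>t = \<parallel>x - \<G>\<^sub>t x\<parallel>\<close> is Birkhoff orthogonal to the span of the dictionary
elements chosen so far, so in a uniformly smooth space its norming functional (the
derivative of the norm) annihilates that span.  Evaluating this functional on \<open>x - \<Phi>\<close> and
bounding the coefficients of \<open>\<Phi>\<close> by \<open>A\<^sub>3\<close> shows: while \<open>r\<^sub>t \<ge> \<surd>\<lambda>\<^sub>1 (\<parallel>x - \<Phi>\<parallel> + \<parallel>\<Phi>\<^sub>Y\<parallel>)\<close>, where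
\<open>\<Phi>\<^sub>Y\<close> collects all but at most \<open>j\<close> of the not yet chosen terms of \<open>\<Phi>\<close>, the weak greedy
step has gain at least \<open>c(\<tau>)/H(j)\<close>, and \<open>D(Q)\<close> turns this into \<open>r\<^sub>t\<^sub>+\<^sub>1 \<le> (1 - 1/G(j)) r\<^sub>t\<close>.
Running dyadic stages \<open>j = 1, 2, 4, \<dots>\<close> of length about \<open>G(j) ln \<Lambda>\<close> until the best
\<open>j\<close>-term tail of the unchosen part of \<open>\<Phi>\<close> drops by the factor \<open>4/\<Lambda>\<close>, property \<open>A\<^sub>1\<close>
forces each phase either to reach \<open>r\<^sub>t \<le> \<lambda>\<^sub>1 \<parallel>x - \<Phi>\<parallel>\<close> or to capture a fixed fraction of
the unchosen support, at a cost which quasi-convexity of \<open>G\<close> makes superadditive; an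
induction on the size of the unchosen support sums the costs to \<open>\<phi>(N)\<close>.
\<close>

section \<open>Scalar actions, spans and functionals\<close>

lemma kfunctional_add: "kfunctional sm F \<Longrightarrow> F (x + y) = F x + F y"
  by (simp add: kfunctional_def)

lemma kfunctional_diff: "kfunctional sm F \<Longrightarrow> F (x - y) = F x - F y"
  by (metis add_diff_cancel diff_add_cancel kfunctional_add)

lemma kfunctional_sum:
  assumes "kfunctional sm F"
  shows "F (\<Sum>i\<in>A. sm (c i) (\<phi> i)) = (\<Sum>i\<in>A. c i * F (\<phi> i))"
proof -
  have "F 0 = 0" using kfunctional_diff[OF assms, of 0 0] by simp
  then show ?thesis
    using assms by (induction A rule: infinite_finite_induct) (simp_all add: kfunctional_def)
qed

locale scalar_action =
  fixes sm :: "'k::real_normed_field \<Rightarrow> 'a::real_normed_vector \<Rightarrow> 'a"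
  assumes normed_space_over: "normed_space_over sm"
begin

lemma sm_add_left: "sm (c + d) x = sm c x + sm d x"
  using normed_space_over by (simp add: normed_space_over_def)

lemma sm_add_right: "sm c (x + y) = sm c x + sm c y"
  using normed_space_over by (simp add: normed_space_over_def)

lemma sm_mult: "sm (c * d) x = sm c (sm d x)"
  using normed_space_over by (simp add: normed_space_over_def)

lemma sm_one [simp]: "sm 1 x = x"
  using normed_space_over by (simp add: normed_space_over_def)

lemma sm_of_real [simp]: "sm (of_real r) x = r *\<^sub>R x"
  using normed_space_over by (simp add: normed_space_over_def)

lemma norm_sm [simp]: "norm (sm c x) = norm c * norm x"
  using normed_space_over by (simp add: normed_space_over_def)

lemma sm_zero_left [simp]: "sm 0 x = 0"
  using sm_of_real[of 0 x] by simp

lemma sm_zero_right [simp]: "sm c 0 = 0"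
  using sm_add_right[of c 0 0] by simp

lemma sm_diff_left: "sm (c - d) x = sm c x - sm d x"
  using sm_add_left[of "c - d" d x] by simp

lemma sm_minus_left: "sm (- c) x = - sm c x"
  using sm_diff_left[of 0 c x] by simp

lemma sm_sum_right: "sm c (sum g A) = (\<Sum>v\<in>A. sm c (g v))"
  by (induction A rule: infinite_finite_induct) (simp_all add: sm_add_right)

lemma kspanI: "finite A \<Longrightarrow> A \<subseteq> S \<Longrightarrow> x = (\<Sum>v\<in>A. sm (c v) v) \<Longrightarrow> x \<in> kspan sm S"
  unfolding kspan_def by auto

lemma kspanE:
  assumes "x \<in> kspan sm S"
  obtains A c where "finite A" "A \<subseteq> S" "x = (\<Sum>v\<in>A. sm (c v) v)"
  using assms unfolding kspan_def by auto

lemma kspan_zero [simp]: "0 \<in> kspan sm S"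
  by (rule kspanI[of "{}"]) simp_all

lemma kspan_empty [simp]: "kspan sm {} = {0}"
  unfolding kspan_def by auto

lemma kspan_sm_base: "v \<in> S \<Longrightarrow> sm c v \<in> kspan sm S"
  by (rule kspanI[of "{v}" _ _ "\<lambda>_. c"]) simp_all

lemma kspan_mono: "S \<subseteq> S' \<Longrightarrow> kspan sm S \<subseteq> kspan sm S'"
  unfolding kspan_def by blast

lemma kspan_add:
  assumes x: "x \<in> kspan sm S" and y: "y \<in> kspan sm S"
  shows "x + y \<in> kspan sm S"
proof -
  obtain A c where A: "finite A" "A \<subseteq> S" "x = (\<Sum>v\<in>A. sm (c v) v)" using x by (rule kspanE)
  obtain B d where B: "finite B" "B \<subseteq> S" "y = (\<Sum>v\<in>B. sm (d v) v)" using y by (rule kspanE)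
  define c' where "c' v = (if v \<in> A then c v else 0)" for v
  define d' where "d' v = (if v \<in> B then d v else 0)" for v
  have "x = (\<Sum>v\<in>A \<union> B. sm (c' v) v)"
    unfolding A(3) by (rule sum.mono_neutral_cong_left) (use A B in \<open>auto simp: c'_def\<close>)
  moreover have "y = (\<Sum>v\<in>A \<union> B. sm (d' v) v)"
    unfolding B(3) by (rule sum.mono_neutral_cong_left) (use A B in \<open>auto simp: d'_def\<close>)
  ultimately have "x + y = (\<Sum>v\<in>A \<union> B. sm (c' v + d' v) v)"
    by (simp add: sum.distrib[symmetric] sm_add_left)
  then show ?thesis using A B by (intro kspanI[of "A \<union> B"]) auto
qed

lemma kspan_sm:
  assumes "x \<in> kspan sm S"
  shows "sm e x \<in> kspan sm S"
proof -
  obtain A c where A: "finite A" "A \<subseteq> S" "x = (\<Sum>v\<in>A. sm (c v) v)" using assms by (rule kspanE)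
  have "sm e x = (\<Sum>v\<in>A. sm (e * c v) v)"
    unfolding A(3) sm_sum_right by (simp add: sm_mult)
  then show ?thesis using A by (intro kspanI[of A]) auto
qed

lemma kspan_scaleR: "x \<in> kspan sm S \<Longrightarrow> r *\<^sub>R x \<in> kspan sm S"
  using kspan_sm[of x S "of_real r"] by simp

lemma kspan_diff:
  assumes "x \<in> kspan sm S" and "y \<in> kspan sm S"
  shows "x - y \<in> kspan sm S"
  using kspan_add[OF assms(1) kspan_scaleR[OF assms(2), of "-1"]] by simp

lemma kspan_sum_image:
  "finite A \<Longrightarrow> \<phi> ` A \<subseteq> S \<Longrightarrow> (\<Sum>i\<in>A. sm (c i) (\<phi> i)) \<in> kspan sm S"
  by (induction A rule: finite_induct) (auto intro!: kspan_add kspan_sm_base)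

lemma kspan_imageE:
  assumes "x \<in> kspan sm (\<phi> ` B)"
  obtains A c where "finite A" "A \<subseteq> B" "x = (\<Sum>i\<in>A. sm (c i) (\<phi> i))"
proof -
  obtain A c where A: "finite A" "A \<subseteq> \<phi> ` B" "x = (\<Sum>v\<in>A. sm (c v) v)"
    using assms by (rule kspanE)
  define g where "g = inv_into B \<phi>"
  have inj: "inj_on g A" unfolding g_def using A(2) by (metis inj_on_inv_into)
  have \<phi>g: "\<phi> (g v) = v" if "v \<in> A" for v
    unfolding g_def using A(2) that by (auto intro: f_inv_into_f)
  have "(\<Sum>i\<in>g ` A. sm (c (\<phi> i)) (\<phi> i)) = x"
    unfolding sum.reindex[OF inj] A(3) by (rule sum.cong) (auto simp: \<phi>g)
  moreover have "g ` A \<subseteq> B" unfolding g_def using A(2) by (auto intro: inv_into_into)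
  ultimately show thesis using A(1) that by (metis finite_imageI)
qed

lemma norming_le_norm:
  assumes "norming sm f F"
  shows "norm (F x) \<le> norm x"
proof -
  have kf: "kfunctional sm F" and dn: "dual_norm F = 1" using assms by (simp_all add: norming_def)
  obtain B where B: "\<And>x. norm (F x) \<le> B * norm x" using kf by (auto simp: kfunctional_def)
  have bdd: "bdd_above ((\<lambda>x. norm (F x)) ` {x. norm x \<le> 1})"
  proof (rule bdd_aboveI2[where M = "\<bar>B\<bar>"])
    fix y :: 'a assume "y \<in> {x. norm x \<le> 1}"
    then have "\<bar>B\<bar> * norm y \<le> \<bar>B\<bar>" by (simp add: mult_left_le)
    moreover have "B * norm y \<le> \<bar>B\<bar> * norm y" by (intro mult_right_mono) auto
    ultimately show "norm (F y) \<le> \<bar>B\<bar>" using B[of y] by linarith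
  qed
  show ?thesis
  proof (cases "x = 0")
    case True then show ?thesis using B[of 0] by simp
  next
    case False
    define y where "y = (1 / norm x) *\<^sub>R x"
    have "norm (F y) \<le> dual_norm F" unfolding dual_norm_def
      by (rule cSUP_upper[OF _ bdd]) (use False in \<open>simp add: y_def norm_divide\<close>)
    moreover have "x = sm (of_real (norm x)) y" using False by (simp add: y_def)
    then have "F x = of_real (norm x) * F y" using kf by (metis kfunctional_def)
    ultimately show ?thesis using dn by (simp add: norm_mult mult_left_le)
  qed
qed

end

lemma scalar_action_scaleR: "scalar_action (scaleR :: real \<Rightarrow> 'a::real_normed_vector \<Rightarrow> 'a)"
  by unfold_locales (simp add: normed_space_over_def scaleR_add_right scaleR_add_left)

lemma property_A1D:
  assumes "property_A1 sm \<phi> N k D" "finite B" "A \<subseteq> B" "card A \<le> N" "card B < D"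
  shows "norm (\<Sum>j\<in>A. sm (c j) (\<phi> j)) \<le> k * norm (\<Sum>j\<in>B. sm (c j) (\<phi> j))"
  using assms unfolding property_A1_def by blast

lemma property_A3D:
  assumes "property_A3 sm \<phi> N H D" "finite B" "A \<subseteq> B" "A \<noteq> {}" "card A \<le> N" "card B < D"
  shows "(\<Sum>j\<in>A. norm (c j)) \<le> H (card A) * norm (\<Sum>j\<in>B. sm (c j) (\<phi> j))"
  using assms unfolding property_A3_def by blast

lemma property_DQD:
  assumes "property_DQ sm \<phi> Q" "f \<noteq> 0" "norming sm f F"
  shows "infdist f (kspan sm {\<phi> i}) \<le> norm f * (1 - Q (norm (F (\<phi> i))))"
  using assms unfolding property_DQ_def by blast


section \<open>The one-sided derivative of the norm\<close>
definition norm_dquot :: "'a::real_normed_vector \<Rightarrow> 'a \<Rightarrow> real \<Rightarrow> real" where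
  "norm_dquot f g t = (norm (f + t *\<^sub>R g) - norm f) / t"

text \<open>By convexity of the norm the difference quotient decreases as \<open>t \<rightarrow> 0+\<close>, so its
infimum is the one-sided Gateaux derivative of the norm at \<open>f\<close> in direction \<open>g\<close>.\<close>

definition norm_deriv :: "'a::real_normed_vector \<Rightarrow> 'a \<Rightarrow> real" where
  "norm_deriv f g = (INF t\<in>{0<..}. norm_dquot f g t)"

lemma norm_dquot_ge: "t > 0 \<Longrightarrow> - norm g \<le> norm_dquot f g t"
  using norm_triangle_ineq4[of "f + t *\<^sub>R g" "t *\<^sub>R g"]
  by (simp add: norm_dquot_def le_divide_eq algebra_simps)

lemma norm_dquot_mono:
  assumes s: "0 < s" and st: "s \<le> t"
  shows "norm_dquot f g s \<le> norm_dquot f g t"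
proof -
  define l where "l = s / t"
  have l: "0 < l" "l \<le> 1" "s = l * t" using s st by (auto simp: l_def)
  have "f + s *\<^sub>R g = (1 - l) *\<^sub>R f + l *\<^sub>R (f + t *\<^sub>R g)"
    by (simp add: l(3) algebra_simps)
  then have "norm (f + s *\<^sub>R g) \<le> (1 - l) * norm f + l * norm (f + t *\<^sub>R g)"
    using norm_triangle_ineq[of "(1 - l) *\<^sub>R f" "l *\<^sub>R (f + t *\<^sub>R g)"] l by simp
  then have "(norm (f + s *\<^sub>R g) - norm f) / s \<le> (l * (norm (f + t *\<^sub>R g) - norm f)) / s"
    using s by (intro divide_right_mono) (simp_all add: algebra_simps)
  also have "\<dots> = (norm (f + t *\<^sub>R g) - norm f) / t" using s st by (simp add: l_def)
  finally show ?thesis unfolding norm_dquot_def .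
qed

lemma bdd_below_norm_dquot: "bdd_below (norm_dquot f g ` {0<..})"
  by (rule bdd_belowI2[of _ "- norm g"]) (simp add: norm_dquot_ge)

lemma norm_deriv_le: "t > 0 \<Longrightarrow> norm_deriv f g \<le> norm_dquot f g t"
  unfolding norm_deriv_def by (rule cINF_lower[OF bdd_below_norm_dquot]) simp

lemma norm_deriv_greatest: "(\<And>t. t > 0 \<Longrightarrow> b \<le> norm_dquot f g t) \<Longrightarrow> b \<le> norm_deriv f g"
  unfolding norm_deriv_def by (rule cINF_greatest) auto

lemma norm_deriv_add_le: "norm_deriv f (g + h) \<le> norm_deriv f g + norm_deriv f h"
proof -
  have key: "norm_deriv f (g + h) \<le> norm_dquot f g t1 + norm_dquot f h t2"
    if "t1 > 0" "t2 > 0" for t1 t2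
  proof -
    define t where "t = min t1 t2 / 2"
    have t: "t > 0" "2 * t \<le> t1" "2 * t \<le> t2" using that by (auto simp: t_def)
    have "f + t *\<^sub>R (g + h) = (1/2) *\<^sub>R (f + (2*t) *\<^sub>R g) + (1/2) *\<^sub>R (f + (2*t) *\<^sub>R h)"
      by (simp add: algebra_simps flip: scaleR_add_left)
    then have "norm (f + t *\<^sub>R (g + h))
        \<le> (1/2) * norm (f + (2*t) *\<^sub>R g) + (1/2) * norm (f + (2*t) *\<^sub>R h)"
      using norm_triangle_ineq[of "(1/2) *\<^sub>R (f + (2*t) *\<^sub>R g)" "(1/2) *\<^sub>R (f + (2*t) *\<^sub>R h)"]
      by simp
    then have "norm_dquot f (g + h) t \<le> norm_dquot f g (2*t) + norm_dquot f h (2*t)"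
      using t(1) unfolding norm_dquot_def
      by (simp add: divide_right_mono add_divide_distrib[symmetric] diff_divide_distrib[symmetric]
          le_divide_eq field_simps del: scaleR_add_right)
    also have "\<dots> \<le> norm_dquot f g t1 + norm_dquot f h t2"
      using t by (intro add_mono norm_dquot_mono) auto
    finally show ?thesis using norm_deriv_le[OF t(1), of f "g + h"] by simp
  qed
  have "norm_deriv f (g + h) - norm_dquot f h t2 \<le> norm_deriv f g" if "t2 > 0" for t2
    by (rule norm_deriv_greatest) (use key that in force)
  then have "norm_deriv f (g + h) - norm_deriv f g \<le> norm_deriv f h"
    by (intro norm_deriv_greatest) (simp add: algebra_simps)
  then show ?thesis by simp
qed

lemma norm_deriv_zero [simp]: "norm_deriv f 0 = 0"
  using norm_deriv_le[of 1 f 0] norm_deriv_greatest[of 0 f 0] by (force simp: norm_dquot_def)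

lemma norm_deriv_scaleR_pos:
  assumes c: "c > 0"
  shows "norm_deriv f (c *\<^sub>R g) = c * norm_deriv f g"
proof -
  have dq: "norm_dquot f (c *\<^sub>R g) t = c * norm_dquot f g (c * t)" if "t > 0" for t
    using c that by (simp add: norm_dquot_def field_simps)
  have "norm_deriv f (c *\<^sub>R g) / c \<le> norm_dquot f g s" if "s > 0" for s
    using norm_deriv_le[of "s / c" f "c *\<^sub>R g"] dq[of "s / c"] that c
    by (simp add: divide_le_eq mult.commute)
  then have "norm_deriv f (c *\<^sub>R g) / c \<le> norm_deriv f g" by (rule norm_deriv_greatest)
  moreover have "c * norm_deriv f g \<le> norm_deriv f (c *\<^sub>R g)"
  proof (rule norm_deriv_greatest)
    fix t :: real assume "t > 0"
    then show "c * norm_deriv f g \<le> norm_dquot f (c *\<^sub>R g) t"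
      using norm_deriv_le[of "c * t" f g] dq c by simp
  qed
  ultimately show ?thesis using c by (simp add: divide_le_eq mult.commute)
qed

lemma norm_deriv_self: "f \<noteq> 0 \<Longrightarrow> norm_deriv f f = norm f"
proof -
  have "norm_dquot f f t = norm f" if "t > 0" for t
  proof -
    have "f + t *\<^sub>R f = (1 + t) *\<^sub>R f" by (simp add: algebra_simps)
    then have "norm (f + t *\<^sub>R f) = (1 + t) * norm f" using that by simp
    then show ?thesis using that unfolding norm_dquot_def by (simp add: field_simps)
  qed
  then show "norm_deriv f f = norm f"
    using norm_deriv_le[of 1 f f] norm_deriv_greatest[of "norm f" f f] by force
qed

lemma norm_deriv_le_norm: "norm_deriv f g \<le> norm g"
  using norm_deriv_le[of 1 f g] norm_triangle_ineq[of f g] by (simp add: norm_dquot_def)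

lemma norm_deriv_nonneg:
  "(\<And>t. t > 0 \<Longrightarrow> norm f \<le> norm (f + t *\<^sub>R v)) \<Longrightarrow> 0 \<le> norm_deriv f v"
  by (rule norm_deriv_greatest) (simp add: norm_dquot_def)

lemma modulus_smoothness_ge:
  fixes x y :: "'a::real_normed_vector"
  assumes "norm x = 1" "norm y = 1"
  shows "(norm (x + u *\<^sub>R y) + norm (x - u *\<^sub>R y)) / 2 - 1 \<le> modulus_smoothness TYPE('a) u"
proof -
  have "bdd_above ((\<lambda>p. (norm (fst p + u *\<^sub>R snd p) + norm (fst p - u *\<^sub>R snd p)) / 2 - 1) `
      {(x::'a, y::'a). norm x = 1 \<and> norm y = 1})"
  proof (rule bdd_aboveI2[where M = "\<bar>u\<bar>"])
    fix p :: "'a \<times> 'a" assume "p \<in> {(x, y). norm x = 1 \<and> norm y = 1}"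
    then have "norm (fst p) = 1" "norm (snd p) = 1" by auto
    then show "(norm (fst p + u *\<^sub>R snd p) + norm (fst p - u *\<^sub>R snd p)) / 2 - 1 \<le> \<bar>u\<bar>"
      using norm_triangle_ineq[of "fst p" "u *\<^sub>R snd p"] norm_triangle_ineq4[of "fst p" "u *\<^sub>R snd p"]
      by (simp add: field_simps)
  qed
  from cSUP_upper[OF _ this, of "(x, y)"] show ?thesis
    unfolding modulus_smoothness_def using assms by simp
qed

lemma norm_dquot_plus_uminus_le:
  fixes f g :: "'a::real_normed_vector"
  assumes f: "f \<noteq> 0" and g: "g \<noteq> 0" and u: "u > 0"
  defines "t \<equiv> u * norm f / norm g"
  shows "norm_dquot f g t + norm_dquot f (- g) t
    \<le> 2 * norm g * (modulus_smoothness TYPE('a) u / u)"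
proof -
  define x where "x = (1 / norm f) *\<^sub>R f"
  define y where "y = (1 / norm g) *\<^sub>R g"
  have t: "t > 0" using u f g by (simp add: t_def)
  have "f + t *\<^sub>R g = norm f *\<^sub>R (x + u *\<^sub>R y)" "f + t *\<^sub>R (- g) = norm f *\<^sub>R (x - u *\<^sub>R y)"
    using f g by (simp_all add: x_def y_def t_def algebra_simps)
  then have "norm (f + t *\<^sub>R g) = norm f * norm (x + u *\<^sub>R y)"
    "norm (f + t *\<^sub>R (- g)) = norm f * norm (x - u *\<^sub>R y)"
    by (simp_all only: norm_scaleR abs_norm_cancel)
  then have "norm_dquot f g t + norm_dquot f (- g) t
      = norm f * (norm (x + u *\<^sub>R y) + norm (x - u *\<^sub>R y) - 2) / t"
    unfolding norm_dquot_def using t by (simp add: field_simps)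
  also have "\<dots> \<le> norm f * (2 * modulus_smoothness TYPE('a) u) / t"
  proof -
    have "norm x = 1" "norm y = 1" using f g by (simp_all add: x_def y_def)
    from modulus_smoothness_ge[OF this, of u] t show ?thesis
      by (intro divide_right_mono mult_left_mono) (simp_all add: field_simps)
  qed
  also have "\<dots> = 2 * norm g * (modulus_smoothness TYPE('a) u / u)"
    using u f g by (simp add: t_def field_simps)
  finally show ?thesis .
qed

lemma norm_deriv_uminus:
  fixes f :: "'a::real_normed_vector"
  assumes smooth: "uniformly_smooth TYPE('a)" and f: "f \<noteq> 0"
  shows "norm_deriv f (- g) = - norm_deriv f g"
proof -
  have small: "norm_deriv f g + norm_deriv f (- g) < e" if e: "e > 0" for e
  proof (cases "g = 0")
    case True then show ?thesis using e by simp
  next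
    case False
    have "eventually (\<lambda>u. modulus_smoothness TYPE('a) u / u < e / (2 * norm g)) (at_right 0)"
      using smooth unfolding uniformly_smooth_def by (rule order_tendstoD(2)) (use e False in simp)
    then obtain b where b: "b > 0"
      "\<And>u. 0 < u \<Longrightarrow> u < b \<Longrightarrow> modulus_smoothness TYPE('a) u / u < e / (2 * norm g)"
      unfolding eventually_at_right_field by auto
    define u where "u = b / 2"
    have u: "u > 0" "modulus_smoothness TYPE('a) u / u < e / (2 * norm g)"
      using b(1) b(2)[of u] by (simp_all add: u_def)
    define t where "t = u * norm f / norm g"
    have "t > 0" using u f False by (simp add: t_def)
    then have "norm_deriv f g + norm_deriv f (- g) \<le> norm_dquot f g t + norm_dquot f (- g) t"
      by (intro add_mono norm_deriv_le)
    also have "\<dots> \<le> 2 * norm g * (modulus_smoothness TYPE('a) u / u)"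
      unfolding t_def by (rule norm_dquot_plus_uminus_le[OF f False u(1)])
    also have "\<dots> < e" using u(2) False by (simp add: field_simps)
    finally show ?thesis .
  qed
  have "0 \<le> norm_deriv f g + norm_deriv f (- g)"
    using norm_deriv_add_le[of f g "- g"] by simp
  moreover have "norm_deriv f g + norm_deriv f (- g) \<le> 0"
    using small[of "(norm_deriv f g + norm_deriv f (- g)) / 2"] by (cases "0 < norm_deriv f g + norm_deriv f (- g)") auto
  ultimately show ?thesis by simp
qed

lemma norm_deriv_add:
  assumes "uniformly_smooth TYPE('a)" and "(f::'a::real_normed_vector) \<noteq> 0"
  shows "norm_deriv f (g + h) = norm_deriv f g + norm_deriv f h"
proof -
  have "norm_deriv f (- (g + h)) \<le> norm_deriv f (- g) + norm_deriv f (- h)"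
    using norm_deriv_add_le[of f "- g" "- h"] by (simp add: add.commute)
  then show ?thesis using norm_deriv_add_le[of f g h] unfolding norm_deriv_uminus[OF assms] by simp
qed

lemma norm_deriv_scaleR:
  assumes smooth: "uniformly_smooth TYPE('a)" and f: "(f::'a::real_normed_vector) \<noteq> 0"
  shows "norm_deriv f (c *\<^sub>R g) = c * norm_deriv f g"
proof (cases c "0::real" rule: linorder_cases)
  case less
  then show ?thesis
    using norm_deriv_uminus[OF smooth f, of "(- c) *\<^sub>R g"] norm_deriv_scaleR_pos[of "- c" f g] by simp
qed (simp_all add: norm_deriv_scaleR_pos)

lemma abs_norm_deriv_le:
  assumes "uniformly_smooth TYPE('a)" and "(f::'a::real_normed_vector) \<noteq> 0"
  shows "\<bar>norm_deriv f g\<bar> \<le> norm g"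
  using norm_deriv_le_norm[of f g] norm_deriv_le_norm[of f "- g"] norm_deriv_uminus[OF assms, of g]
  by simp

lemma norm_deriv_eq_0_if_orthogonal:
  assumes "uniformly_smooth TYPE('a)" and "(f::'a::real_normed_vector) \<noteq> 0"
    and "\<And>t. norm f \<le> norm (f + t *\<^sub>R v)"
  shows "norm_deriv f v = 0"
proof -
  have "0 \<le> norm_deriv f v" by (rule norm_deriv_nonneg) (rule assms(3))
  moreover have "0 \<le> norm_deriv f (- v)" by (rule norm_deriv_nonneg) (use assms(3)[of "- _"] in simp)
  ultimately show ?thesis using norm_deriv_uminus[OF assms(1,2), of v] by simp
qed

section \<open>Norming functionals annihilating a span\<close>

definition annihilating_norming ::
    "('k::real_normed_field \<Rightarrow> 'a::real_normed_vector \<Rightarrow> 'a) \<Rightarrow> bool" where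
  "annihilating_norming sm \<longleftrightarrow> (\<forall>f W. f \<noteq> 0 \<and> (\<forall>v\<in>kspan sm W. norm f \<le> norm (f + v)) \<longrightarrow>
      (\<exists>F. norming sm f F \<and> (\<forall>v\<in>kspan sm W. F v = 0)))"

lemma dual_norm_eq_1:
  fixes F :: "'a::real_normed_vector \<Rightarrow> 'k::real_normed_field"
  assumes le: "\<And>x. norm (F x) \<le> norm x" and x0: "norm x0 = 1" "norm (F x0) = 1"
  shows "dual_norm F = 1"
proof -
  have le1: "norm (F x) \<le> 1" if "x \<in> {x. norm x \<le> 1}" for x
    using le[of x] that by simp
  then have "bdd_above ((\<lambda>x. norm (F x)) ` {x. norm x \<le> 1})" by (rule bdd_aboveI2)
  from cSUP_upper[OF _ this, of x0] have "1 \<le> dual_norm F"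
    unfolding dual_norm_def using x0 by simp
  moreover have "dual_norm F \<le> 1" unfolding dual_norm_def
    by (rule cSUP_least) (use le1 in \<open>auto intro: exI[of _ 0]\<close>)
  ultimately show ?thesis by simp
qed

lemma annihilating_norming_real:
  assumes smooth: "uniformly_smooth TYPE('a::real_normed_vector)"
  shows "annihilating_norming (scaleR :: real \<Rightarrow> 'a \<Rightarrow> 'a)"
  unfolding annihilating_norming_def
proof (intro allI impI, elim conjE)
  fix f :: 'a and W
  assume f: "f \<noteq> 0" and orth: "\<forall>v\<in>kspan scaleR W. norm f \<le> norm (f + v)"
  interpret scalar_action "scaleR :: real \<Rightarrow> 'a \<Rightarrow> 'a" by (rule scalar_action_scaleR)
  define F where "F = norm_deriv f"
  have le: "norm (F x) \<le> norm x" for x using abs_norm_deriv_le[OF smooth f] by (simp add: F_def)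
  have "kfunctional scaleR F"
    unfolding kfunctional_def F_def
    using norm_deriv_add[OF smooth f] norm_deriv_scaleR[OF smooth f] le
    by (auto intro!: exI[of _ 1] simp: F_def)
  moreover have "F f = norm f" using norm_deriv_self[OF f] by (simp add: F_def)
  moreover have "dual_norm F = 1"
    by (rule dual_norm_eq_1[OF le, of "(1 / norm f) *\<^sub>R f"])
      (use f norm_deriv_scaleR[OF smooth f] norm_deriv_self[OF f] in \<open>simp_all add: F_def\<close>)
  moreover have "F v = 0" if "v \<in> kspan scaleR W" for v
    unfolding F_def using that orth kspan_scaleR
    by (intro norm_deriv_eq_0_if_orthogonal[OF smooth f]) blast
  ultimately show "\<exists>F. norming scaleR f F \<and> (\<forall>v\<in>kspan scaleR W. F v = 0)"
    by (auto simp: norming_def)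
qed

lemma cmod_one_plus_imag_le: "cmod (1 + \<i> * complex_of_real a) \<le> 1 + a\<^sup>2"
proof -
  have "(1 + a\<^sup>2) * 1 \<le> (1 + a\<^sup>2) * (1 + a\<^sup>2)" by (intro mult_left_mono) auto
  then show ?thesis by (simp add: cmod_def real_le_lsqrt power2_eq_square)
qed

locale complex_smooth_point = scalar_action sm for sm :: "complex \<Rightarrow> 'a::real_normed_vector \<Rightarrow> 'a" +
  fixes f :: 'a
  assumes smooth: "uniformly_smooth TYPE('a)" and nonzero: "f \<noteq> 0"
begin

text \<open>The real part of a complex-linear functional determines it, \<open>Im (F g) = - Re (F (\<i> g))\<close>;
here the real part is the derivative of the norm at \<open>f\<close>.\<close>

definition cderiv :: "'a \<Rightarrow> complex" where
  "cderiv g = Complex (norm_deriv f g) (- norm_deriv f (sm \<i> g))"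

lemma norm_deriv_sm:
  "norm_deriv f (sm c x) = Re c * norm_deriv f x + Im c * norm_deriv f (sm \<i> x)"
proof -
  have "c = of_real (Re c) + of_real (Im c) * \<i>" by (simp add: complex_eq_iff)
  then have "sm c x = sm (of_real (Re c) + of_real (Im c) * \<i>) x"
    by (rule arg_cong[where f = "\<lambda>c. sm c x"])
  also have "\<dots> = Re c *\<^sub>R x + Im c *\<^sub>R sm \<i> x"
    by (simp only: sm_add_left sm_mult sm_of_real)
  finally show ?thesis by (simp add: norm_deriv_add[OF smooth nonzero] norm_deriv_scaleR[OF smooth nonzero])
qed

lemma sm_i_i: "sm \<i> (sm \<i> x) = - x"
  using sm_mult[of \<i> \<i> x] sm_minus_left[of 1 x] by simp

lemma cderiv_add: "cderiv (x + y) = cderiv x + cderiv y"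
  unfolding cderiv_def by (simp add: sm_add_right norm_deriv_add[OF smooth nonzero] complex_eq_iff)

lemma cderiv_sm: "cderiv (sm c x) = c * cderiv x"
proof -
  have "norm_deriv f (sm \<i> (sm c x)) = norm_deriv f (sm c (sm \<i> x))"
    using sm_mult[of \<i> c x] sm_mult[of c \<i> x] by (simp add: mult.commute)
  also have "\<dots> = Re c * norm_deriv f (sm \<i> x) - Im c * norm_deriv f x"
    unfolding norm_deriv_sm[of c "sm \<i> x"] sm_i_i norm_deriv_uminus[OF smooth nonzero] by simp
  finally show ?thesis unfolding cderiv_def norm_deriv_sm[of c x] by (simp add: complex_eq_iff)
qed

lemma norm_cderiv_le: "norm (cderiv x) \<le> norm x"
proof (cases "cderiv x = 0")
  case False
  define w where "w = cnj (cderiv x) / of_real (cmod (cderiv x))"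
  have "w * cderiv x = of_real (cmod (cderiv x))"
    using complex_norm_square[of "cderiv x"] False
    by (simp add: w_def power2_eq_square field_simps mult.commute)
  then have "cmod (cderiv x) = norm_deriv f (sm w x)"
    using cderiv_sm[of w x] by (simp add: cderiv_def complex_eq_iff)
  also have "\<dots> \<le> norm (sm w x)" by (rule norm_deriv_le_norm)
  also have "\<dots> = norm x" using False by (simp add: w_def norm_divide)
  finally show ?thesis .
qed simp

text \<open>\<open>\<parallel>f + t \<i> s f\<parallel> = \<bar>1 + \<i> t s\<bar> \<parallel>f\<parallel>\<close> exceeds \<open>\<parallel>f\<parallel>\<close> only to second order in \<open>t\<close>.\<close>

lemma norm_deriv_sm_imag_nonpos: "norm_deriv f (sm (\<i> * of_real s) f) \<le> 0"
proof (rule field_le_epsilon)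
  fix e :: real assume e: "e > 0"
  define X where "X = s\<^sup>2 * norm f"
  define t where "t = e / (X + 1)"
  have X: "0 < X + 1" by (simp add: X_def add_nonneg_pos)
  have t: "t > 0" "t * (s\<^sup>2 * norm f) \<le> e"
    using e X by (simp_all add: t_def divide_le_eq flip: X_def)
  have "cmod (1 + \<i> * complex_of_real (t * s)) \<le> 1 + (t * s)\<^sup>2"
    by (rule cmod_one_plus_imag_le)
  moreover have "f + t *\<^sub>R sm (\<i> * of_real s) f = sm (1 + \<i> * of_real (t * s)) f"
    by (simp add: sm_add_left sm_mult[symmetric] mult_ac flip: sm_of_real)
  ultimately have "norm (f + t *\<^sub>R sm (\<i> * of_real s) f) \<le> (1 + (t * s)\<^sup>2) * norm f"
    by (simp add: mult_right_mono)
  then have "norm_dquot f (sm (\<i> * of_real s) f) t \<le> t * (s\<^sup>2 * norm f)"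
    using t unfolding norm_dquot_def by (simp add: field_simps power2_eq_square)
  then show "norm_deriv f (sm (\<i> * of_real s) f) \<le> 0 + e"
    using norm_deriv_le[OF t(1), of f "sm (\<i> * of_real s) f"] t(2) by simp
qed

lemma cderiv_self: "cderiv f = of_real (norm f)"
proof -
  have "norm_deriv f (sm \<i> f) \<le> 0" using norm_deriv_sm_imag_nonpos[of 1] by simp
  moreover have "norm_deriv f (- sm \<i> f) \<le> 0"
    using norm_deriv_sm_imag_nonpos[of "-1"] by (simp add: sm_minus_left)
  ultimately show ?thesis
    unfolding cderiv_def using norm_deriv_self[OF nonzero] norm_deriv_uminus[OF smooth nonzero]
    by (simp add: complex_eq_iff)
qed

lemma norming_cderiv: "norming sm f cderiv"
proof -
  have "kfunctional sm cderiv"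
    unfolding kfunctional_def using cderiv_add cderiv_sm norm_cderiv_le by (auto intro!: exI[of _ 1])
  moreover have "dual_norm cderiv = 1"
    by (rule dual_norm_eq_1[OF norm_cderiv_le, of "sm (of_real (1 / norm f)) f"])
      (use nonzero in \<open>simp_all add: cderiv_sm cderiv_self norm_divide del: sm_of_real\<close>)
  ultimately show ?thesis by (simp add: norming_def cderiv_self)
qed

end

lemma annihilating_norming_complex:
  fixes sm :: "complex \<Rightarrow> 'a::real_normed_vector \<Rightarrow> 'a"
  assumes "scalar_action sm" and smooth: "uniformly_smooth TYPE('a)"
  shows "annihilating_norming sm"
  unfolding annihilating_norming_def
proof (intro allI impI, elim conjE)
  fix f :: 'a and W
  assume f: "f \<noteq> 0" and orth: "\<forall>v\<in>kspan sm W. norm f \<le> norm (f + v)"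
  interpret complex_smooth_point sm f by unfold_locales (use assms f in \<open>simp_all add: scalar_action_def\<close>)
  have "norm_deriv f v = 0" if "v \<in> kspan sm W" for v
    using that orth kspan_scaleR by (intro norm_deriv_eq_0_if_orthogonal[OF smooth f]) blast
  then have "cderiv v = 0" if "v \<in> kspan sm W" for v
    using that kspan_sm[OF that, of \<i>] by (simp add: cderiv_def complex_eq_iff)
  then show "\<exists>F. norming sm f F \<and> (\<forall>v\<in>kspan sm W. F v = 0)"
    using norming_cderiv by blast
qed

lemma quasi_convex1_mono:
  assumes "quasi_convex1 g" and "1 \<le> x" and "x \<le> y"
  shows "g x / real x \<le> g y / real y"
  using assms(3)
proof (induction y rule: dec_induct)
  case (step n)
  then show ?case using assms(1,2) unfolding quasi_convex1_def by (metis Suc_eq_plus1 order_trans le_trans)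
qed simp

lemma quasi_convex1_superadditive:
  assumes g: "quasi_convex1 g" and x: "1 \<le> x" and y: "1 \<le> y"
  shows "g x + g y \<le> g (x + y)"
proof -
  have "g x \<le> real x * (g (x + y) / real (x + y))" "g y \<le> real y * (g (x + y) / real (x + y))"
    using quasi_convex1_mono[OF g x, of "x + y"] quasi_convex1_mono[OF g y, of "x + y"] x y
    by (simp_all add: field_simps)
  then have "g x + g y \<le> (real x + real y) * (g (x + y) / real (x + y))"
    unfolding distrib_right by (rule add_mono)
  also have "\<dots> = g (x + y)" using x by simp
  finally show ?thesis .
qed

lemma quasi_convex1_dyadic_sum:
  assumes g: "quasi_convex1 g" and nonneg: "0 \<le> g (2 ^ m)"
  shows "(\<Sum>i<Suc m. g (2 ^ i)) \<le> 2 * g (2 ^ m)"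
proof -
  have "g (2 ^ i) \<le> 2 ^ i * (g (2 ^ m) / 2 ^ m)" if "i < Suc m" for i
    using quasi_convex1_mono[OF g, of "2 ^ i" "2 ^ m"] that
    by (simp add: power_increasing field_simps)
  then have "(\<Sum>i<Suc m. g (2 ^ i)) \<le> (\<Sum>i<Suc m. 2 ^ i) * (g (2 ^ m) / 2 ^ m)"
    unfolding sum_distrib_right by (intro sum_mono) blast
  also have "(\<Sum>i<Suc m. (2::real) ^ i) = 2 ^ Suc m - 1"
    by (induction m) simp_all
  also have "(2 ^ Suc m - 1) * (g (2 ^ m) / 2 ^ m) \<le> 2 ^ Suc m * (g (2 ^ m) / 2 ^ m)"
    using nonneg by (intro mult_right_mono) auto
  finally show ?thesis by simp
qed

lemma decseq_geometric_decay:
  fixes r :: "nat \<Rightarrow> real"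
  assumes dec: "decseq r" and \<theta>: "0 \<le> \<theta>" and q: "0 \<le> q" "q \<le> 1"
    and step: "\<And>t. s \<le> t \<Longrightarrow> t < s + L \<Longrightarrow> \<theta> \<le> r t \<Longrightarrow> r (Suc t) \<le> q * r t"
  shows "r (s + L) \<le> max \<theta> (q ^ L * r s)"
  using step
proof (induction L)
  case (Suc L)
  then have IH: "r (s + L) \<le> max \<theta> (q ^ L * r s)" by simp
  show ?case
  proof (cases "\<theta> \<le> r (s + L)")
    case True
    have "r (s + Suc L) \<le> q * r (s + L)" using Suc.prems[of "s + L"] True by simp
    also have "\<dots> \<le> q * max \<theta> (q ^ L * r s)" using IH q by (intro mult_left_mono)
    also have "\<dots> \<le> max \<theta> (q ^ Suc L * r s)"
    proof (cases "\<theta> \<le> q ^ L * r s")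
      case False
      then have "q * max \<theta> (q ^ L * r s) \<le> \<theta>" using q \<theta> by (simp add: mult_left_le_one_le)
      then show ?thesis by simp
    qed (simp add: mult.assoc)
    finally show ?thesis .
  next
    case False
    moreover have "r (s + Suc L) \<le> r (s + L)" using dec by (simp add: decseq_Suc_iff)
    ultimately show ?thesis by simp
  qed
qed simp

lemma one_minus_power_le:
  fixes x :: real
  assumes "0 \<le> x" "x \<le> 1" "0 < c" "ln c \<le> x * real L"
  shows "(1 - x) ^ L \<le> 1 / c"
proof -
  have "(1 - x) ^ L \<le> exp (- x) ^ L"
    using assms exp_ge_add_one_self[of "- x"] by (intro power_mono) auto
  also have "\<dots> = exp (- (x * real L))" by (simp add: exp_of_nat_mult[symmetric] mult.commute)
  also have "\<dots> \<le> exp (- ln c)" using assms(4) by simp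
  also have "\<dots> = 1 / c" using assms(3) by (simp add: exp_minus inverse_eq_divide)
  finally show ?thesis .
qed

lemma gain_lower_bound:
  fixes r e x mu :: real
  assumes r: "0 < r" and mu: "1 < mu" and e: "0 \<le> e" "mu * e \<le> r" and le: "r \<le> e + x * (e + r)"
  shows "(1 - 1 / mu) / 2 \<le> x"
proof -
  have e_le: "e \<le> r / mu" using e mu by (simp add: field_simps)
  moreover have "r / mu < r" using mu r by (simp add: divide_less_eq)
  ultimately have e_lt: "e < r" by linarith
  have x: "0 < x"
  proof (rule ccontr)
    assume "\<not> 0 < x"
    then have "x * (e + r) \<le> 0" using e r by (simp add: mult_nonpos_nonneg)
    then show False using le e_lt by linarith
  qed
  have "r * (1 - 1 / mu) \<le> r - e" using e_le by (simp add: right_diff_distrib)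
  also have "\<dots> \<le> x * (e + r)" using le by simp
  also have "\<dots> \<le> x * (2 * r)" using x e_lt by (intro mult_left_mono) auto
  finally have "r * (1 - 1 / mu) \<le> r * (2 * x)" by (simp add: mult_ac)
  then have "1 - 1 / mu \<le> 2 * x" using r by simp
  then show ?thesis by simp
qed

lemma last_stage_bounds:
  fixes mu eps sigma tp tg q r0 r :: real
  assumes mu: "1 < mu" and sigma: "0 \<le> sigma" and tg: "tg \<le> eps * tp" and eps: "0 < eps" "eps \<le> 1"
    and q: "0 \<le> q" "q \<le> eps" and r0: "0 \<le> r0" "r0 \<le> mu * (sigma + tp)"
    and r: "r \<le> max (mu * (sigma + tg)) (q * r0)" and large: "mu * mu * sigma < r"
  shows "r \<le> mu * sigma + mu * (eps * tp)" and "(mu - 1) * sigma < eps * tp"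
proof -
  consider "r \<le> mu * (sigma + tg)" | "r \<le> q * r0" using r by linarith
  then have "r \<le> mu * sigma + mu * (eps * tp) \<and> (mu - 1) * sigma < eps * tp"
  proof cases
    case 1
    then have "mu * ((mu - 1) * sigma) < mu * tg" using large by (simp add: algebra_simps)
    then have "(mu - 1) * sigma < tg" using mu by simp
    moreover have "mu * tg \<le> mu * (eps * tp)" using tg mu by simp
    ultimately show ?thesis using tg 1 by (simp add: algebra_simps)
  next
    case 2
    have "q * r0 \<le> eps * (mu * (sigma + tp))" using q r0 by (intro mult_mono) auto
    with 2 have r1: "r \<le> eps * mu * sigma + mu * (eps * tp)" by (simp add: algebra_simps)
    have "eps * mu * sigma \<le> mu * sigma" using eps mu sigma by (simp add: mult_left_le_one_le mult.assoc)
    moreover have "mu * ((mu - eps) * sigma) < mu * (eps * tp)" using large r1 by (simp add: algebra_simps)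
    then have "(mu - eps) * sigma < eps * tp" using mu by simp
    moreover have "(mu - 1) * sigma \<le> (mu - eps) * sigma" using eps sigma by (simp add: mult_right_mono)
    ultimately show ?thesis using r1 by simp
  qed
  then show "r \<le> mu * sigma + mu * (eps * tp)" "(mu - 1) * sigma < eps * tp" by simp_all
qed

lemma last_stage_arith:
  fixes mu eps kN sigma tp r :: real
  assumes mu: "1 < mu" and tp: "0 \<le> tp" and kN: "0 < kN"
    and eps_kN: "eps * (1 + mu * mu) * kN = (mu - 1) / 2"
    and r_le: "r \<le> mu * sigma + mu * (eps * tp)" and sigma_lt: "(mu - 1) * sigma < eps * tp"
  shows "kN * (r + sigma) < tp"
proof -
  have "(mu - 1) * (r + sigma) \<le> (mu - 1) * (mu * sigma + mu * (eps * tp) + sigma)"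
    using r_le mu by simp
  also have "\<dots> = (mu + 1) * ((mu - 1) * sigma) + (mu - 1) * mu * (eps * tp)"
    by (simp add: algebra_simps)
  also have "\<dots> < (mu + 1) * (eps * tp) + (mu - 1) * mu * (eps * tp)"
    using sigma_lt mu by simp
  also have "\<dots> = eps * (1 + mu * mu) * tp" by (simp add: algebra_simps)
  also have "\<dots> = (eps * (1 + mu * mu) * kN) * tp / kN" using kN by simp
  also have "\<dots> = (mu - 1) * (tp / (2 * kN))" unfolding eps_kN by simp
  finally have "(mu - 1) * (r + sigma) < (mu - 1) * (tp / (2 * kN))" .
  then have "r + sigma < tp / (2 * kN)" by (rule mult_left_less_imp_less) (use mu in simp)
  also have "\<dots> \<le> tp / kN" using tp kN by (simp add: frac_le)
  finally show ?thesis using kN by (simp add: field_simps)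
qed

section \<open>The residuals of a WCGA run\<close>

locale wcga_run = scalar_action sm for sm :: "'k::real_normed_field \<Rightarrow> 'a::real_normed_vector \<Rightarrow> 'a" +
  fixes \<phi> :: "'i \<Rightarrow> 'a" and \<tau> :: real and G :: "nat \<Rightarrow> 'a \<Rightarrow> 'a" and f :: 'a and ix :: "nat \<Rightarrow> 'i"
  assumes start: "G 0 f = 0"
    and step: "\<And>n. (f - G n f = 0 \<longrightarrow> G (Suc n) f = f) \<and>
          (f - G n f \<noteq> 0 \<longrightarrow>
             (\<forall>F. norming sm (f - G n f) F \<longrightarrow>
                (\<forall>j. \<tau> * norm (F (\<phi> j)) \<le> norm (F (\<phi> (ix (Suc n)))))) \<and>
             G (Suc n) f \<in> kspan sm ((\<lambda>k. \<phi> (ix k)) ` {1..Suc n}) \<and>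
             norm (f - G (Suc n) f) = infdist f (kspan sm ((\<lambda>k. \<phi> (ix k)) ` {1..Suc n})))"
begin

definition chosen :: "nat \<Rightarrow> 'i set" where
  "chosen t = ix ` {1..t}"

definition span_chosen :: "nat \<Rightarrow> 'a set" where
  "span_chosen t = kspan sm (\<phi> ` chosen t)"

definition resid :: "nat \<Rightarrow> real" where
  "resid t = norm (f - G t f)"

lemma finite_chosen [simp]: "finite (chosen t)"
  by (simp add: chosen_def)

lemma card_chosen_le: "card (chosen t) \<le> t"
  unfolding chosen_def using card_image_le[of "{1..t}" ix] by simp

lemma chosen_mono: "s \<le> t \<Longrightarrow> chosen s \<subseteq> chosen t"
  unfolding chosen_def by auto

lemma span_chosen_mono: "s \<le> t \<Longrightarrow> span_chosen s \<subseteq> span_chosen t"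
  unfolding span_chosen_def by (intro kspan_mono image_mono chosen_mono)

lemma approx_mem_span_chosen: "G t f \<in> span_chosen t"
  and resid_eq_infdist: "resid t = infdist f (span_chosen t)"
proof (induction t)
  case 0
  have "span_chosen 0 = {0}" by (simp add: span_chosen_def chosen_def)
  then show "G 0 f \<in> span_chosen 0" "resid 0 = infdist f (span_chosen 0)"
    by (simp_all add: start resid_def)
next
  case (Suc n)
  have span: "kspan sm ((\<lambda>k. \<phi> (ix k)) ` {1..Suc n}) = span_chosen (Suc n)"
    unfolding span_chosen_def chosen_def by (simp add: image_image)
  show "G (Suc n) f \<in> span_chosen (Suc n)" "resid (Suc n) = infdist f (span_chosen (Suc n))"
  proof (atomize (full), cases "f - G n f = 0")
    case True
    then have "G (Suc n) f = f" "f \<in> span_chosen (Suc n)"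
      using step[of n] Suc.IH(1) span_chosen_mono[of n "Suc n"] by auto
    then show "G (Suc n) f \<in> span_chosen (Suc n) \<and> resid (Suc n) = infdist f (span_chosen (Suc n))"
      by (simp add: resid_def)
  next
    case False
    then show "G (Suc n) f \<in> span_chosen (Suc n) \<and> resid (Suc n) = infdist f (span_chosen (Suc n))"
      using step[of n] unfolding span by (simp add: resid_def)
  qed
qed

lemma resid_le: "v \<in> span_chosen t \<Longrightarrow> resid t \<le> norm (f - v)"
  using infdist_le[of v "span_chosen t" f] by (simp add: resid_eq_infdist dist_norm)

lemma decseq_resid: "decseq resid"
proof (rule decseq_SucI)
  fix t
  show "resid (Suc t) \<le> resid t"
    unfolding resid_eq_infdist
    by (rule infdist_mono[OF span_chosen_mono]) (simp, metis empty_iff kspan_zero span_chosen_def)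
qed

lemma resid_antimono: "s \<le> t \<Longrightarrow> resid t \<le> resid s"
  using decseq_resid by (simp add: decseq_def)

lemma resid_orthogonal:
  "v \<in> span_chosen t \<Longrightarrow> norm (f - G t f) \<le> norm (f - G t f + v)"
  using resid_le[of "G t f - v" t] kspan_diff[of "G t f" _ v] approx_mem_span_chosen[of t]
  by (simp add: span_chosen_def resid_def algebra_simps)

lemma resid_Suc_le_infdist:
  "resid (Suc t) \<le> infdist (f - G t f) (kspan sm {\<phi> (ix (Suc t))})"
proof -
  have "resid (Suc t) \<le> dist (f - G t f) w" if w: "w \<in> kspan sm {\<phi> (ix (Suc t))}" for w
  proof -
    have "{\<phi> (ix (Suc t))} \<subseteq> \<phi> ` chosen (Suc t)" by (auto simp: chosen_def)
    then have "w \<in> span_chosen (Suc t)" using w kspan_mono unfolding span_chosen_def by blast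
    moreover have "G t f \<in> span_chosen (Suc t)"
      using approx_mem_span_chosen[of t] span_chosen_mono[of t "Suc t"] by auto
    ultimately have "G t f + w \<in> span_chosen (Suc t)"
      unfolding span_chosen_def by (intro kspan_add)
    then show ?thesis using resid_le by (force simp: dist_norm algebra_simps)
  qed
  then show ?thesis
    by (subst infdist_notempty) (auto intro!: cINF_greatest kspan_zero)
qed

lemma greedy_choice:
  "f - G t f \<noteq> 0 \<Longrightarrow> norming sm (f - G t f) F \<Longrightarrow> \<tau> * norm (F (\<phi> j)) \<le> norm (F (\<phi> (ix (Suc t))))"
  using step[of t] by blast

lemma obtain_annihilating_norming:
  assumes "annihilating_norming sm" and "resid t \<noteq> 0"
  obtains F where "norming sm (f - G t f) F" and "\<And>v. v \<in> span_chosen t \<Longrightarrow> F v = 0"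
proof -
  have "f - G t f \<noteq> 0" using assms(2) by (simp add: resid_def)
  moreover have "\<forall>v\<in>kspan sm (\<phi> ` chosen t). norm (f - G t f) \<le> norm (f - G t f + v)"
    using resid_orthogonal by (simp add: span_chosen_def)
  ultimately show thesis
    using assms(1) that unfolding annihilating_norming_def span_chosen_def by blast
qed

lemma resid_Suc_le_DQ:
  assumes "property_DQ sm \<phi> Q" and "f - G t f \<noteq> 0" and "norming sm (f - G t f) F"
  shows "resid (Suc t) \<le> resid t * (1 - Q (norm (F (\<phi> (ix (Suc t))))))"
  using resid_Suc_le_infdist[of t] assms(1)[unfolded property_DQ_def, rule_format, OF assms(2,3)]
  unfolding resid_def by (rule order_trans)

end

section \<open>The Lebesgue-type inequality\<close>

locale wcga_lebesgue = wcga_run sm \<phi> \<tau> G f ix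
  for sm :: "'k::real_normed_field \<Rightarrow> 'a::real_normed_vector \<Rightarrow> 'a" and \<phi> :: "'i \<Rightarrow> 'a"
    and \<tau> G f ix +
  fixes N D :: nat and kN :: real and Q :: "real \<Rightarrow> real" and H :: "nat \<Rightarrow> real" and lam :: real
    and T :: "'i set" and a :: "'i \<Rightarrow> 'k"
  assumes norming: "annihilating_norming sm"
    and nonzero: "\<And>i. \<phi> i \<noteq> 0"
    and tau: "0 < \<tau>" "\<tau> \<le> 1"
    and N: "1 \<le> N" "N < D"
    and Q_mono: "mono_on {0..} Q" and Q_pos: "\<And>t. t > 0 \<Longrightarrow> 0 < Q t"
    and H_pos: "\<And>n. n \<ge> 1 \<Longrightarrow> 0 < H n" and H_mono: "mono_on {1..} H"
    and DQ: "property_DQ sm \<phi> Q" and A1: "property_A1 sm \<phi> N kN D" and A3: "property_A3 sm \<phi> N H D"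
    and lam: "1 < lam" and kN: "0 < kN"
    and quasi_convex: "quasi_convex1 (\<lambda>n. 1 / Q ((\<tau> / 2) * (1 - 1 / sqrt lam) / H n))"
    and budget: "real N + 8 * ln (8 * (1 + lam) * kN / (sqrt lam - 1))
            * (1 / Q ((\<tau> / 2) * (1 - 1 / sqrt lam) / H (2 * N))) < real D"
    and finite_T: "finite T" and card_T: "card T \<le> N"
begin

definition comb :: "'i set \<Rightarrow> 'a" where
  "comb A = (\<Sum>i\<in>A. sm (a i) (\<phi> i))"

definition sigma :: real where
  "sigma = norm (f - comb T)"

definition unchosen :: "nat \<Rightarrow> 'i set" where
  "unchosen t = T - chosen t"

lemma sigma_nonneg: "0 \<le> sigma"
  by (simp add: sigma_def)

lemma finite_unchosen [simp]: "finite (unchosen t)"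
  using finite_T by (simp add: unchosen_def)

lemma unchosen_antimono: "s \<le> t \<Longrightarrow> unchosen t \<subseteq> unchosen s"
  unfolding unchosen_def using chosen_mono by auto

lemma comb_split: "A \<subseteq> B \<Longrightarrow> finite B \<Longrightarrow> comb B = comb A + comb (B - A)"
  unfolding comb_def by (metis add.commute sum.subset_diff)

lemma comb_mem_span_chosen: "A \<subseteq> chosen t \<Longrightarrow> comb A \<in> span_chosen t"
  unfolding comb_def span_chosen_def
  by (intro kspan_sum_image) (auto intro: finite_subset)

lemma norm_comb_minus_approx_le: "norm (comb S - G t f) \<le> norm (f - comb S) + resid t"
  using norm_triangle_ineq4[of "f - G t f" "f - comb S"] by (simp add: resid_def)

text \<open>The form in which \<open>A\<^sub>1\<close> and \<open>A\<^sub>3\<close> are applied: the index sets have fewer than \<open>D\<close>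
elements as long as \<open>N + t < D\<close>.\<close>

lemma comb_minus_approx_repr:
  assumes S: "S \<subseteq> T"
  obtains B b where "finite B" "S \<subseteq> B" "card B \<le> N + t" "\<And>i. i \<in> S - chosen t \<Longrightarrow> b i = a i"
    "(\<Sum>i\<in>B. sm (b i) (\<phi> i)) = comb S - G t f"
proof -
  obtain C c where C: "finite C" "C \<subseteq> chosen t" "G t f = (\<Sum>i\<in>C. sm (c i) (\<phi> i))"
    using approx_mem_span_chosen[of t] unfolding span_chosen_def by (rule kspan_imageE)
  have finS: "finite S" using S finite_T finite_subset by auto
  define B where "B = S \<union> C"
  define b where "b i = (if i \<in> S then a i else 0) - (if i \<in> C then c i else 0)" for i
  have finB: "finite B" using finS C(1) by (simp add: B_def)
  have "card B \<le> card S + card C" unfolding B_def by (rule card_Un_le)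
  also have "\<dots> \<le> N + t"
    using card_mono[OF finite_T S] card_T card_mono[OF finite_chosen C(2)] card_chosen_le[of t]
    by simp
  finally have cB: "card B \<le> N + t" .
  have "comb S = (\<Sum>i\<in>B. sm (if i \<in> S then a i else 0) (\<phi> i))"
    unfolding comb_def B_def by (rule sum.mono_neutral_cong_left) (use finB in \<open>auto simp: B_def\<close>)
  moreover have "G t f = (\<Sum>i\<in>B. sm (if i \<in> C then c i else 0) (\<phi> i))"
    unfolding C(3) B_def by (rule sum.mono_neutral_cong_left) (use finB in \<open>auto simp: B_def\<close>)
  ultimately have "(\<Sum>i\<in>B. sm (b i) (\<phi> i)) = comb S - G t f"
    by (simp add: b_def sm_diff_left sum_subtractf)
  moreover have "b i = a i" if "i \<in> S - chosen t" for i using that C(2) by (auto simp: b_def)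
  ultimately show thesis using that[of B b] finB cB by (simp add: B_def)
qed

lemma norm_comb_unchosen_le:
  assumes t: "N + t < D" and A: "A \<subseteq> unchosen t"
  shows "norm (comb A) \<le> kN * (resid t + sigma)"
proof -
  obtain B b where B: "finite B" "T \<subseteq> B" "card B \<le> N + t" "\<And>i. i \<in> T - chosen t \<Longrightarrow> b i = a i"
    "(\<Sum>i\<in>B. sm (b i) (\<phi> i)) = comb T - G t f"
    using comb_minus_approx_repr[of T t] by blast
  have AT: "A \<subseteq> T" using A by (auto simp: unchosen_def)
  have "comb A = (\<Sum>j\<in>A. sm (b j) (\<phi> j))"
    unfolding comb_def using A B(4) by (intro sum.cong) (auto simp: unchosen_def)
  also have "norm \<dots> \<le> kN * norm (\<Sum>j\<in>B. sm (b j) (\<phi> j))"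
    using property_A1D[OF A1 B(1)] B(2,3) AT t card_mono[OF finite_T AT] card_T by force
  also have "\<dots> \<le> kN * (sigma + resid t)"
    using norm_comb_minus_approx_le[of T t] kN unfolding B(5) sigma_def
    by (intro mult_left_mono) auto
  finally show ?thesis by (simp add: add.commute)
qed

lemma resid_le_sigma_plus_unchosen: "resid t \<le> sigma + norm (comb (unchosen t))"
proof -
  have "resid t \<le> norm (f - comb (T \<inter> chosen t))"
    by (rule resid_le) (rule comb_mem_span_chosen, simp)
  also have "f - comb (T \<inter> chosen t) = (f - comb T) + comb (unchosen t)"
    using comb_split[of "T \<inter> chosen t" T] finite_T by (simp add: unchosen_def Diff_Int)
  also have "norm \<dots> \<le> sigma + norm (comb (unchosen t))"
    unfolding sigma_def by (rule norm_triangle_ineq)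
  finally show ?thesis .
qed

definition mu :: real where
  "mu = sqrt lam"

definition c_tau :: real where
  "c_tau = \<tau> / 2 * (1 - 1 / mu)"

definition Gseq :: "nat \<Rightarrow> real" where
  "Gseq n = 1 / Q (c_tau / H n)"

lemma mu_gt_1: "1 < mu"
  using lam by (simp add: mu_def)

lemma mu_mult_self: "mu * mu = lam"
  using lam by (simp add: mu_def)

lemma c_tau_pos: "0 < c_tau"
  using tau mu_gt_1 by (simp add: c_tau_def field_simps)

lemma c_tau_le_half: "c_tau \<le> 1 / 2"
  using mult_le_one[OF tau(2), of "1 - 1 / mu"] mu_gt_1 by (simp add: c_tau_def)

lemma H_le: "1 \<le> j \<Longrightarrow> j \<le> j' \<Longrightarrow> H j \<le> H j'"
  using H_mono unfolding mono_on_def by auto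

lemma Q_le: "0 \<le> x \<Longrightarrow> x \<le> y \<Longrightarrow> Q x \<le> Q y"
  using Q_mono unfolding mono_on_def by auto

lemma Q_c_tau_pos: "1 \<le> j \<Longrightarrow> 0 < Q (c_tau / H j)"
  using Q_pos c_tau_pos H_pos by simp

lemma Q_c_tau_antimono: "1 \<le> j \<Longrightarrow> j \<le> j' \<Longrightarrow> Q (c_tau / H j') \<le> Q (c_tau / H j)"
  using c_tau_pos H_pos[of j] H_pos[of j'] H_le[of j j']
  by (intro Q_le) (simp_all add: frac_le)

text \<open>The singleton \<open>{\<phi> i}\<close> gives \<open>1 \<le> kN\<close> in \<open>A\<^sub>1\<close> and \<open>1 \<le> H 1 \<parallel>\<phi> i\<parallel>\<close> in \<open>A\<^sub>3\<close>;
with \<open>D(Q)\<close> at \<open>f = \<phi> i\<close> the latter yields \<open>Q \<le> 1\<close> on the relevant range.\<close>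

lemma kN_ge_1: "1 \<le> kN"
proof -
  define i :: 'i where "i = undefined"
  have "norm (\<phi> i) \<le> kN * norm (\<phi> i)"
    using property_A1D[OF A1, where A = "{i}" and B = "{i}" and c = "\<lambda>_. 1"] N by simp
  then show ?thesis using nonzero[of i] by simp
qed

lemma Q_c_tau_le_1:
  assumes j: "1 \<le> j"
  shows "Q (c_tau / H j) \<le> 1"
proof -
  define i :: 'i where "i = undefined"
  obtain F where F: "norming sm (\<phi> i) F"
    using norming[unfolded annihilating_norming_def, rule_format, of "\<phi> i" "{}"] nonzero[of i]
    by auto
  have "infdist (\<phi> i) (kspan sm {\<phi> i}) \<le> norm (\<phi> i) * (1 - Q (norm (F (\<phi> i))))"
    using property_DQD[OF DQ nonzero F] .
  then have "0 \<le> norm (\<phi> i) * (1 - Q (norm (\<phi> i)))"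
    using F infdist_nonneg[of "\<phi> i" "kspan sm {\<phi> i}"] by (simp add: norming_def)
  then have Q_norm_le: "Q (norm (\<phi> i)) \<le> 1" using nonzero[of i] by (simp add: zero_le_mult_iff)
  have "1 \<le> H 1 * norm (\<phi> i)"
    using property_A3D[OF A3, where A = "{i}" and B = "{i}" and c = "\<lambda>_. 1"] N by simp
  then have "1 / H 1 \<le> norm (\<phi> i)" using H_pos[of 1] by (simp add: field_simps)
  have "c_tau / H j \<le> c_tau / H 1"
    using c_tau_pos H_pos[of 1] H_le[OF order_refl j] by (simp add: frac_le)
  also have "\<dots> \<le> 1 / H 1" using c_tau_le_half H_pos[of 1] by (simp add: divide_right_mono)
  also have "\<dots> \<le> norm (\<phi> i)" by fact
  finally have "Q (c_tau / H j) \<le> Q (norm (\<phi> i))"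
    using c_tau_pos H_pos[OF j] by (intro Q_le) simp_all
  then show ?thesis using Q_norm_le by simp
qed

lemma Gseq_ge_1: "1 \<le> j \<Longrightarrow> 1 \<le> Gseq j"
  unfolding Gseq_def using Q_c_tau_le_1 Q_c_tau_pos by simp

lemma Gseq_pos: "1 \<le> j \<Longrightarrow> 0 < Gseq j"
  using Gseq_ge_1 by fastforce

lemma Gseq_mono: "1 \<le> j \<Longrightarrow> j \<le> j' \<Longrightarrow> Gseq j \<le> Gseq j'"
  unfolding Gseq_def using Q_c_tau_antimono Q_c_tau_pos by (simp add: frac_le)

lemma quasi_convex1_Gseq: "quasi_convex1 Gseq"
  using quasi_convex unfolding Gseq_def c_tau_def mu_def .

lemma norm_f_minus_comb_diff_le:
  assumes "Y \<subseteq> T"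
  shows "norm (f - comb (T - Y)) \<le> sigma + norm (comb Y)"
proof -
  have "f - comb (T - Y) = (f - comb T) + comb Y"
    using comb_split[OF assms finite_T] by simp
  then show ?thesis unfolding sigma_def by (metis norm_triangle_ineq)
qed

lemma resid_le_greedy_value:
  assumes F: "norming sm (f - G t f) F" "\<And>v. v \<in> span_chosen t \<Longrightarrow> F v = 0"
    and nonzero: "f - G t f \<noteq> 0" and Y: "Y \<subseteq> T"
  shows "resid t \<le> (sigma + norm (comb Y))
    + norm (F (\<phi> (ix (Suc t)))) / \<tau> * (\<Sum>i\<in>unchosen t - Y. norm (a i))"
proof -
  have kf: "kfunctional sm F" using F(1) by (simp add: norming_def)
  define S where "S = T - Y"
  have "S - S \<inter> chosen t = unchosen t - Y" by (auto simp: S_def unchosen_def)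
  then have split: "comb S = comb (S \<inter> chosen t) + comb (unchosen t - Y)"
    using comb_split[of "S \<inter> chosen t" S] finite_T by (simp add: S_def)
  have f_eq: "f = (f - comb S) + (comb (S \<inter> chosen t) + comb (unchosen t - Y))"
    using split by simp
  have "F (f - G t f) = F f - F (G t f)" by (rule kfunctional_diff[OF kf])
  also have "F (G t f) = 0" using F(2) approx_mem_span_chosen by blast
  also have "F f = F (f - comb S) + (F (comb (S \<inter> chosen t)) + F (comb (unchosen t - Y)))"
    by (subst f_eq) (simp only: kfunctional_add[OF kf])
  also have "F (comb (S \<inter> chosen t)) = 0" using F(2) comb_mem_span_chosen by blast
  finally have "F (f - G t f) = F (f - comb S) + F (comb (unchosen t - Y))" by simp
  moreover have "resid t = norm (F (f - G t f))" using F(1) by (simp add: norming_def resid_def)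
  ultimately have "resid t \<le> norm (F (f - comb S)) + norm (F (comb (unchosen t - Y)))"
    by (simp add: norm_triangle_ineq)
  moreover have "norm (F (f - comb S)) \<le> sigma + norm (comb Y)"
    using norming_le_norm[OF F(1), of "f - comb S"] norm_f_minus_comb_diff_le[OF Y]
    unfolding S_def by linarith
  moreover have "norm (F (comb (unchosen t - Y)))
      \<le> norm (F (\<phi> (ix (Suc t)))) / \<tau> * (\<Sum>i\<in>unchosen t - Y. norm (a i))"
  proof -
    have "norm (F (comb (unchosen t - Y))) \<le> (\<Sum>i\<in>unchosen t - Y. norm (a i) * norm (F (\<phi> i)))"
      unfolding comb_def kfunctional_sum[OF kf] norm_mult[symmetric] by (rule norm_sum)
    also have "\<dots> \<le> (\<Sum>i\<in>unchosen t - Y. norm (a i) * (norm (F (\<phi> (ix (Suc t)))) / \<tau>))"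
      using greedy_choice[OF nonzero F(1)] tau
      by (intro sum_mono mult_left_mono) (simp_all add: field_simps)
    finally show ?thesis by (simp add: sum_distrib_left mult.commute)
  qed
  ultimately show ?thesis by linarith
qed

lemma coeff_sum_unchosen_le:
  assumes t: "N + t < D" and Y: "Y \<subseteq> T" and ne: "unchosen t - Y \<noteq> {}"
  shows "(\<Sum>i\<in>unchosen t - Y. norm (a i))
    \<le> H (card (unchosen t - Y)) * (sigma + norm (comb Y) + resid t)"
proof -
  define A where "A = unchosen t - Y"
  obtain B b where B: "finite B" "T - Y \<subseteq> B" "card B \<le> N + t"
    "\<And>i. i \<in> T - Y - chosen t \<Longrightarrow> b i = a i" "(\<Sum>i\<in>B. sm (b i) (\<phi> i)) = comb (T - Y) - G t f"
    using comb_minus_approx_repr[of "T - Y" t] by blast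
  have AT: "A \<subseteq> T - Y - chosen t" by (auto simp: A_def unchosen_def)
  have "(\<Sum>i\<in>A. norm (a i)) = (\<Sum>i\<in>A. norm (b i))"
    using B(4) AT by (intro sum.cong) auto
  also have "\<dots> \<le> H (card A) * norm (comb (T - Y) - G t f)"
    using property_A3D[OF A3 B(1), of A b] AT B(2,3) ne t card_mono[OF finite_T, of A] card_T
    unfolding B(5) A_def by force
  also have "\<dots> \<le> H (card A) * (sigma + norm (comb Y) + resid t)"
    using norm_comb_minus_approx_le[of "T - Y" t] norm_f_minus_comb_diff_le[OF Y] H_pos[of "card A"]
      ne finite_unchosen[of t]
    by (intro mult_left_mono) (auto simp: A_def card_gt_0_iff Suc_le_eq)
  finally show ?thesis by (simp add: A_def)
qed

lemma resid_Suc_le: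
  assumes t: "N + t < D" and Y: "Y \<subseteq> T" and j: "1 \<le> j" "card (unchosen t - Y) \<le> j"
    and large: "mu * (sigma + norm (comb Y)) \<le> resid t"
  shows "resid (Suc t) \<le> (1 - Q (c_tau / H j)) * resid t"
proof (cases "resid t = 0")
  case True
  then show ?thesis using resid_antimono[of t "Suc t"] by (simp add: resid_def)
next
  case False
  then have r_pos: "0 < resid t" by (simp add: resid_def)
  have nonzero: "f - G t f \<noteq> 0" using False by (simp add: resid_def)
  obtain F where F: "norming sm (f - G t f) F" "\<And>v. v \<in> span_chosen t \<Longrightarrow> F v = 0"
    using obtain_annihilating_norming[OF norming False] by blast
  define e where "e = sigma + norm (comb Y)"
  define gain where "gain = norm (F (\<phi> (ix (Suc t))))"
  define A where "A = unchosen t - Y"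
  have e: "0 \<le> e" "mu * e \<le> resid t" using large sigma_nonneg by (simp_all add: e_def)
  have le: "resid t \<le> e + gain / \<tau> * (\<Sum>i\<in>A. norm (a i))"
    using resid_le_greedy_value[OF F nonzero Y] by (simp add: e_def gain_def A_def)
  have A_ne: "A \<noteq> {}"
  proof
    assume "A = {}"
    then have "(mu - 1) * e \<le> 0" using le e by (simp add: algebra_simps)
    then have "e \<le> 0" using mu_gt_1 by (simp add: mult_le_0_iff)
    then show False using le r_pos \<open>A = {}\<close> by simp
  qed
  have A_card: "1 \<le> card A" using A_ne finite_unchosen[of t] by (simp add: A_def Suc_le_eq card_gt_0_iff)
  have "gain / \<tau> * (\<Sum>i\<in>A. norm (a i)) \<le> gain / \<tau> * (H (card A) * (e + resid t))"
    using coeff_sum_unchosen_le[OF t Y] A_ne tau by (intro mult_left_mono) (simp_all add: A_def e_def gain_def)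
  with le have "resid t \<le> e + gain / \<tau> * H (card A) * (e + resid t)" by simp
  from gain_lower_bound[OF r_pos mu_gt_1 e this]
  have "c_tau / H (card A) \<le> gain"
    using tau H_pos[OF A_card] by (simp add: c_tau_def field_simps)
  moreover have "c_tau / H j \<le> c_tau / H (card A)"
    using c_tau_pos H_pos[OF A_card] H_le[OF A_card] j(2) by (simp add: A_def frac_le)
  ultimately have "Q (c_tau / H j) \<le> Q gain"
    using c_tau_pos H_pos[OF j(1)] by (intro Q_le) simp_all
  then have "resid t * (1 - Q gain) \<le> resid t * (1 - Q (c_tau / H j))"
    using r_pos by (intro mult_left_mono) simp_all
  then show ?thesis
    using resid_Suc_le_DQ[OF DQ nonzero F(1)] by (simp add: gain_def mult.commute)
qed

end

context wcga_lebesgue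
begin

definition Lam :: real where
  "Lam = 8 * (1 + lam) * kN / (mu - 1)"

definition n_iter :: nat where
  "n_iter = nat \<lfloor>8 * ln Lam * Gseq (2 * N)\<rfloor>"

definition eps :: real where
  "eps = 4 / Lam"

text \<open>\<open>stage_len j\<close> steps at the rate \<open>1 - Q (c_tau / H j)\<close> of \<open>resid_Suc_le\<close> shrink the
residual by the factor \<open>eps\<close>.\<close>

definition stage_len :: "nat \<Rightarrow> nat" where
  "stage_len j = nat \<lceil>Gseq j * ln (Lam / 4)\<rceil>"

text \<open>\<open>cost n\<close> is the number of steps a phase may spend to capture \<open>n\<close> further terms of the
support of \<open>\<Phi>\<close>; the budget \<open>n_iter = \<lfloor>\<phi>(N)\<rfloor>\<close> covers \<open>cost N\<close>.\<close>

definition cost :: "nat \<Rightarrow> real" where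
  "cost n = (if n = 0 then 0 else 2 * ln Lam * Gseq (2 * n))"

lemma Lam_ge_8: "8 \<le> Lam"
proof -
  have "mu * 1 \<le> mu * mu" using mu_gt_1 by (intro mult_left_mono) auto
  then have "mu - 1 \<le> 1 + lam" using mu_mult_self by simp
  then have "1 \<le> (1 + lam) / (mu - 1)" using mu_gt_1 by (simp add: field_simps)
  then have "1 \<le> (1 + lam) / (mu - 1) * kN" using kN_ge_1 by (metis mult_mono' mult_1 zero_le_one)
  then have "8 * 1 \<le> 8 * ((1 + lam) / (mu - 1) * kN)" by (intro mult_left_mono) auto
  then show ?thesis unfolding Lam_def by (simp add: field_simps)
qed

lemma ln_Lam_nonneg: "0 \<le> ln Lam"
  using Lam_ge_8 by simp

lemma eps_pos: "0 < eps"
  using Lam_ge_8 by (simp add: eps_def)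

lemma eps_le_1: "eps \<le> 1"
  using Lam_ge_8 by (simp add: eps_def)

lemma eps_kN_eq: "eps * (1 + mu * mu) * kN = (mu - 1) / 2"
proof -
  have cancel: "4 / (8 * A * k / B) * A * k = B / 2" if "0 < A" "0 < B" "0 < k" for A B k :: real
    using that by (simp add: field_simps)
  have "eps * (1 + lam) * kN = (mu - 1) / 2"
    unfolding eps_def Lam_def by (rule cancel) (use lam mu_gt_1 kN in simp_all)
  then show ?thesis by (simp only: mu_mult_self)
qed

lemma decay_pow_stage_len_le:
  assumes j: "1 \<le> j"
  shows "(1 - Q (c_tau / H j)) ^ stage_len j \<le> eps"
proof -
  have "Gseq j * ln (Lam / 4) \<le> real (stage_len j)"
    unfolding stage_len_def by (rule real_nat_ceiling_ge)
  then have "ln (Lam / 4) \<le> Q (c_tau / H j) * real (stage_len j)"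
    using Q_c_tau_pos[OF j] by (simp add: Gseq_def field_simps)
  then show ?thesis
    using one_minus_power_le[of "Q (c_tau / H j)" "Lam / 4" "stage_len j"]
      Q_c_tau_pos[OF j] Q_c_tau_le_1[OF j] Lam_ge_8
    by (simp add: eps_def)
qed

lemma stage_len_le: "1 \<le> j \<Longrightarrow> real (stage_len j) \<le> Gseq j * ln Lam"
proof -
  assume j: "1 \<le> j"
  have "exp 1 \<le> (4::real)" using exp_le by simp
  then have "1 \<le> ln (4::real)" by (metis ln_exp ln_le_cancel_iff exp_gt_zero zero_less_numeral)
  then have "1 \<le> Gseq j * ln 4" using Gseq_ge_1[OF j] by (metis mult_mono' mult_1 zero_le_one)
  moreover have "0 \<le> Gseq j * ln (Lam / 4)" using Gseq_pos[OF j] Lam_ge_8 by simp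
  then have "real (stage_len j) \<le> Gseq j * ln (Lam / 4) + 1"
    unfolding stage_len_def by linarith
  moreover have "ln (Lam / 4) = ln Lam - ln 4" using Lam_ge_8 by (simp add: ln_div)
  ultimately show ?thesis by (simp add: algebra_simps)
qed

lemma cost_nonneg: "0 \<le> cost n"
  using Gseq_pos[of "2 * n"] ln_Lam_nonneg by (auto simp: cost_def)

lemma cost_mono: "n \<le> m \<Longrightarrow> cost n \<le> cost m"
  unfolding cost_def using ln_Lam_nonneg Gseq_mono[of "2 * n" "2 * m"] Gseq_pos[of "2 * m"]
  by (auto intro: mult_left_mono)

lemma cost_superadditive: "cost n + cost m \<le> cost (n + m)"
proof (cases "n = 0 \<or> m = 0")
  case False
  then have "Gseq (2 * n) + Gseq (2 * m) \<le> Gseq (2 * n + 2 * m)"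
    by (intro quasi_convex1_superadditive[OF quasi_convex1_Gseq]) auto
  then have "2 * ln Lam * (Gseq (2 * n) + Gseq (2 * m)) \<le> 2 * ln Lam * Gseq (2 * (n + m))"
    using ln_Lam_nonneg by (intro mult_left_mono) (simp_all add: algebra_simps)
  then show ?thesis using False by (simp add: cost_def distrib_left)
qed (auto simp: cost_def)

lemma n_iter_eq: "n_iter = nat \<lfloor>8 * ln (8 * (1 + lam) * kN / (sqrt lam - 1))
    * (1 / Q ((\<tau> / 2) * (1 - 1 / sqrt lam) / H (2 * N)))\<rfloor>"
  by (simp add: n_iter_def Lam_def Gseq_def c_tau_def mu_def)

lemma N_plus_n_iter_less: "N + n_iter < D"
proof -
  have "0 \<le> 8 * ln Lam * Gseq (2 * N)" using ln_Lam_nonneg Gseq_pos[of "2 * N"] N by simp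
  then have "real n_iter \<le> 8 * ln Lam * Gseq (2 * N)" by (simp add: n_iter_def)
  then show ?thesis
    using budget by (simp add: Lam_def Gseq_def c_tau_def mu_def n_iter_def)
qed

lemma cost_N_le_n_iter: "cost N \<le> real n_iter"
proof -
  have "exp 1 \<le> Lam" using exp_le Lam_ge_8 by simp
  then have "1 \<le> ln Lam" using Lam_ge_8 by (metis ln_exp ln_le_cancel_iff exp_gt_zero less_le_trans)
  then have "1 * 1 \<le> ln Lam * Gseq (2 * N)"
    using Gseq_ge_1[of "2 * N"] N by (intro mult_mono) auto
  then have "cost N + 1 \<le> 8 * ln Lam * Gseq (2 * N)" using N by (simp add: cost_def)
  moreover have "8 * ln Lam * Gseq (2 * N) - 1 < real n_iter"
    unfolding n_iter_def using ln_Lam_nonneg Gseq_pos[of "2 * N"] N by simp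
  ultimately show ?thesis by simp
qed

end

context wcga_lebesgue
begin

definition tail :: "nat \<Rightarrow> nat \<Rightarrow> real" where
  "tail t0 j = Min ((\<lambda>S. norm (comb (unchosen t0 - S))) ` {S. S \<subseteq> unchosen t0 \<and> card S \<le> j})"

lemma tail_attained:
  obtains S where "S \<subseteq> unchosen t0" "card S \<le> j" "tail t0 j = norm (comb (unchosen t0 - S))"
proof -
  have "finite {S. S \<subseteq> unchosen t0 \<and> card S \<le> j}"
    by (rule finite_subset[of _ "Pow (unchosen t0)"]) auto
  moreover have "{} \<in> {S. S \<subseteq> unchosen t0 \<and> card S \<le> j}" by simp
  ultimately have "tail t0 j \<in> (\<lambda>S. norm (comb (unchosen t0 - S))) ` {S. S \<subseteq> unchosen t0 \<and> card S \<le> j}"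
    unfolding tail_def by (intro Min_in) auto
  then show thesis using that by blast
qed

lemma tail_le: "S \<subseteq> unchosen t0 \<Longrightarrow> card S \<le> j \<Longrightarrow> tail t0 j \<le> norm (comb (unchosen t0 - S))"
  unfolding tail_def by (rule Min_le) (auto intro: finite_subset[of _ "Pow (unchosen t0)"])

lemma tail_nonneg: "0 \<le> tail t0 j"
proof -
  obtain S where "tail t0 j = norm (comb (unchosen t0 - S))" by (rule tail_attained)
  then show ?thesis by simp
qed

lemma tail_eq_0: "card (unchosen t0) \<le> j \<Longrightarrow> tail t0 j = 0"
  using tail_le[of "unchosen t0" t0 j] tail_nonneg[of t0 j] by (simp add: comb_def)

lemma tail_0: "tail t0 0 = norm (comb (unchosen t0))"
proof -
  obtain S where "S \<subseteq> unchosen t0" "card S \<le> 0" "tail t0 0 = norm (comb (unchosen t0 - S))"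
    by (rule tail_attained)
  moreover from this have "S = {}" using finite_subset[OF _ finite_unchosen] card_0_eq by blast
  ultimately show ?thesis by simp
qed

lemma tail_le_resid:
  assumes "t0 \<le> t" "N + t < D" "card (unchosen t0 - unchosen t) \<le> j"
  shows "tail t0 j \<le> kN * (resid t + sigma)"
proof -
  have "tail t0 j \<le> norm (comb (unchosen t0 - (unchosen t0 - unchosen t)))"
    using assms(3) by (intro tail_le) auto
  also have "unchosen t0 - (unchosen t0 - unchosen t) = unchosen t"
    using unchosen_antimono[OF assms(1)] by blast
  finally show ?thesis using norm_comb_unchosen_le[OF assms(2) order_refl] by simp
qed

lemma resid_stage_decay:
  assumes "t0 \<le> s" "s + L \<le> n_iter" "1 \<le> j"
  shows "resid (s + L) \<le> max (mu * (sigma + tail t0 j)) ((1 - Q (c_tau / H j)) ^ L * resid s)"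
proof -
  obtain S where S: "S \<subseteq> unchosen t0" "card S \<le> j" "tail t0 j = norm (comb (unchosen t0 - S))"
    by (rule tail_attained)
  show ?thesis
  proof (rule decseq_geometric_decay[OF decseq_resid])
    show "0 \<le> mu * (sigma + tail t0 j)" using mu_gt_1 sigma_nonneg tail_nonneg by simp
    show "0 \<le> 1 - Q (c_tau / H j)" "1 - Q (c_tau / H j) \<le> 1"
      using Q_c_tau_pos[OF assms(3)] Q_c_tau_le_1[OF assms(3)] by simp_all
  next
    fix t assume t: "s \<le> t" "t < s + L" "mu * (sigma + tail t0 j) \<le> resid t"
    have "unchosen t - (unchosen t0 - S) \<subseteq> S" using unchosen_antimono[of t0 t] assms(1) t(1) by auto
    then have "card (unchosen t - (unchosen t0 - S)) \<le> j"
      using S(2) card_mono[OF finite_subset[OF S(1) finite_unchosen]] by (meson le_trans)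
    moreover have "N + t < D" using t(2) assms(2) N_plus_n_iter_less by simp
    ultimately show "resid (Suc t) \<le> (1 - Q (c_tau / H j)) * resid t"
      using t(3) S(3) assms(3) by (intro resid_Suc_le) (auto simp: unchosen_def)
  qed
qed

definition stage_start :: "nat \<Rightarrow> nat \<Rightarrow> nat" where
  "stage_start t0 i = t0 + (\<Sum>i'<i. stage_len (2 ^ i'))"

definition prev_size :: "nat \<Rightarrow> nat" where
  "prev_size i = (case i of 0 \<Rightarrow> 0 | Suc k \<Rightarrow> 2 ^ k)"

lemma stage_start_0 [simp]: "stage_start t0 0 = t0"
  by (simp add: stage_start_def)

lemma stage_start_Suc [simp]: "stage_start t0 (Suc i) = stage_start t0 i + stage_len (2 ^ i)"
  by (simp add: stage_start_def)

lemma le_stage_start: "t0 \<le> stage_start t0 i"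
  by (simp add: stage_start_def)

lemma stage_start_mono: "i \<le> i' \<Longrightarrow> stage_start t0 i \<le> stage_start t0 i'"
  unfolding stage_start_def by (intro add_left_mono sum_mono2) auto

lemma stage_start_le: "real (stage_start t0 (Suc i)) \<le> real t0 + 2 * ln Lam * Gseq (2 ^ i)"
proof -
  have "(\<Sum>i'<Suc i. real (stage_len (2 ^ i'))) \<le> (\<Sum>i'<Suc i. Gseq (2 ^ i')) * ln Lam"
    unfolding sum_distrib_right by (intro sum_mono stage_len_le) simp
  also have "\<dots> \<le> 2 * Gseq (2 ^ i) * ln Lam"
    using quasi_convex1_dyadic_sum[OF quasi_convex1_Gseq] Gseq_pos[of "2 ^ i"] ln_Lam_nonneg
    by (intro mult_right_mono) simp_all
  finally show ?thesis by (simp add: stage_start_def mult_ac)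
qed

lemma stage_start_le_cost:
  assumes "2 ^ i \<le> 2 * p"
  shows "real (stage_start t0 (Suc i)) \<le> real t0 + cost p"
proof -
  have "2 * ln Lam * Gseq (2 ^ i) \<le> 2 * ln Lam * Gseq (2 * p)"
    using assms ln_Lam_nonneg by (intro mult_left_mono Gseq_mono) simp_all
  moreover have "p \<noteq> 0" using assms by (intro notI) simp
  ultimately show ?thesis using stage_start_le[of t0 i] by (simp add: cost_def)
qed

lemma resid_stage_start:
  assumes "stage_start t0 i \<le> n_iter"
    and no_gap: "\<And>i'. i' < i \<Longrightarrow> eps * tail t0 (prev_size i') < tail t0 (2 ^ i')"
  shows "resid (stage_start t0 i) \<le> lam * sigma \<or>
    resid (stage_start t0 i) \<le> mu * (sigma + tail t0 (prev_size i))"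
  using assms
proof (induction i)
  case 0
  have "resid t0 \<le> sigma + tail t0 0" using resid_le_sigma_plus_unchosen[of t0] by (simp add: tail_0)
  also have "\<dots> \<le> mu * (sigma + tail t0 0)"
    using mu_gt_1 sigma_nonneg tail_nonneg[of t0 0] by (simp add: mult_le_cancel_right1)
  finally show ?case by (simp add: prev_size_def)
next
  case (Suc i)
  let ?s = "stage_start t0 i" and ?j = "2 ^ i :: nat"
  have s: "?s \<le> n_iter" using Suc.prems(1) stage_start_mono[of i "Suc i" t0] by simp
  show ?case
  proof (cases "resid ?s \<le> lam * sigma")
    case True
    then show ?thesis using resid_antimono[of ?s "stage_start t0 (Suc i)"] by simp
  next
    case False
    then have r_le: "resid ?s \<le> mu * (sigma + tail t0 (prev_size i))"
      using Suc.IH[OF s] Suc.prems(2) by simp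
    have q: "0 \<le> (1 - Q (c_tau / H ?j)) ^ stage_len ?j" "(1 - Q (c_tau / H ?j)) ^ stage_len ?j \<le> eps"
      using Q_c_tau_le_1[of ?j] decay_pow_stage_len_le[of ?j] by simp_all
    have "(1 - Q (c_tau / H ?j)) ^ stage_len ?j * resid ?s \<le> eps * (mu * (sigma + tail t0 (prev_size i)))"
      using q r_le resid_antimono[of 0 ?s] by (intro mult_mono) (simp_all add: resid_def)
    also have "\<dots> = mu * (eps * sigma + eps * tail t0 (prev_size i))" by (simp add: algebra_simps)
    also have "\<dots> \<le> mu * (sigma + tail t0 ?j)"
      using Suc.prems(2)[of i] mult_left_le_one_le[OF sigma_nonneg eps_pos[THEN less_imp_le] eps_le_1]
        mu_gt_1 by (intro mult_left_mono add_mono) simp_all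
    finally have "resid (stage_start t0 (Suc i)) \<le> mu * (sigma + tail t0 ?j)"
      using resid_stage_decay[OF le_stage_start[of t0 i], of "stage_len ?j" ?j] Suc.prems(1) by simp
    then show ?thesis by (simp add: prev_size_def)
  qed
qed

lemma first_tail_gap:
  assumes n: "1 \<le> card (unchosen t0)"
  obtains i where "tail t0 (2 ^ i) \<le> eps * tail t0 (prev_size i)"
    "\<And>i'. i' < i \<Longrightarrow> eps * tail t0 (prev_size i') < tail t0 (2 ^ i')"
    "2 ^ i \<le> 2 * card (unchosen t0)"
proof -
  define n where "n = card (unchosen t0)"
  define gap where "gap i \<longleftrightarrow> tail t0 (2 ^ i) \<le> eps * tail t0 (prev_size i)" for i
  have gap_large: "gap i" if "n \<le> 2 ^ i" for i
    using tail_eq_0[of t0 "2 ^ i"] that eps_pos tail_nonneg[of t0] by (simp add: gap_def n_def)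
  define i0 where "i0 = (LEAST i. n \<le> 2 ^ i)"
  have i0: "n \<le> 2 ^ i0" unfolding i0_def by (rule LeastI[of _ n]) simp
  have "2 ^ i0 < 2 * n"
  proof (cases i0)
    case 0 then show ?thesis using n by (simp add: n_def)
  next
    case (Suc k)
    have "\<not> n \<le> 2 ^ k" unfolding i0_def by (rule not_less_Least) (simp add: Suc i0_def[symmetric])
    then show ?thesis using Suc by simp
  qed
  define i where "i = (LEAST i. gap i)"
  show thesis
  proof (rule that)
    show "tail t0 (2 ^ i) \<le> eps * tail t0 (prev_size i)"
      unfolding i_def gap_def[symmetric] by (rule LeastI[of gap i0]) (rule gap_large[OF i0])
    show "eps * tail t0 (prev_size i') < tail t0 (2 ^ i')" if "i' < i" for i'
      using not_less_Least[OF that[unfolded i_def]] by (simp add: gap_def)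
    have "i \<le> i0" unfolding i_def by (rule Least_le) (rule gap_large[OF i0])
    then have "(2::nat) ^ i \<le> 2 ^ i0" by (simp add: power_increasing)
    then show "2 ^ i \<le> 2 * card (unchosen t0)" using \<open>2 ^ i0 < 2 * n\<close> unfolding n_def by linarith
  qed
qed

lemma last_stage_removes_support:
  assumes gap: "tail t0 (2 ^ i) \<le> eps * tail t0 (prev_size i)"
    and start: "resid (stage_start t0 i) \<le> mu * (sigma + tail t0 (prev_size i))"
    and budget: "stage_start t0 (Suc i) \<le> n_iter"
    and large: "lam * sigma < resid (stage_start t0 (Suc i))"
  shows "prev_size i < card (unchosen t0 - unchosen (stage_start t0 (Suc i)))"
proof (rule ccontr)
  let ?t1 = "stage_start t0 (Suc i)" and ?j = "2 ^ i :: nat"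
  have t0: "t0 \<le> stage_start t0 i" "t0 \<le> ?t1" by (rule le_stage_start)+
  assume "\<not> ?thesis"
  then have "tail t0 (prev_size i) \<le> kN * (resid ?t1 + sigma)"
    using budget N_plus_n_iter_less t0(2) by (intro tail_le_resid) simp_all
  moreover have "kN * (resid ?t1 + sigma) < tail t0 (prev_size i)"
  proof (rule last_stage_arith[OF mu_gt_1 tail_nonneg kN eps_kN_eq])
    have q: "0 \<le> (1 - Q (c_tau / H ?j)) ^ stage_len ?j"
      "(1 - Q (c_tau / H ?j)) ^ stage_len ?j \<le> eps"
      using Q_c_tau_le_1[of ?j] decay_pow_stage_len_le[of ?j] by simp_all
    have r0: "0 \<le> resid (stage_start t0 i)" by (simp add: resid_def)
    have r: "resid ?t1 \<le> max (mu * (sigma + tail t0 ?j))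
        ((1 - Q (c_tau / H ?j)) ^ stage_len ?j * resid (stage_start t0 i))"
      using resid_stage_decay[OF t0(1), of "stage_len ?j" ?j] budget by simp
    have "mu * mu * sigma < resid ?t1" using large mu_mult_self by simp
    from last_stage_bounds[OF mu_gt_1 sigma_nonneg gap eps_pos eps_le_1 q r0 start r this]
    show "resid ?t1 \<le> mu * sigma + mu * (eps * tail t0 (prev_size i))"
      and "(mu - 1) * sigma < eps * tail t0 (prev_size i)" .
  qed
  ultimately show False by simp
qed

lemma phase:
  assumes n: "1 \<le> card (unchosen t0)"
    and budget: "real t0 + cost (card (unchosen t0)) \<le> real n_iter"
  obtains t1 where "t0 \<le> t1" "t1 \<le> n_iter" "resid t1 \<le> lam * sigma"
  | t1 p where "t0 \<le> t1" "1 \<le> p" "card (unchosen t1) + p \<le> card (unchosen t0)"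
      "real t1 \<le> real t0 + cost p"
proof -
  obtain i where gap: "tail t0 (2 ^ i) \<le> eps * tail t0 (prev_size i)"
    and no_gap: "\<And>i'. i' < i \<Longrightarrow> eps * tail t0 (prev_size i') < tail t0 (2 ^ i')"
    and size: "2 ^ i \<le> 2 * card (unchosen t0)"
    using first_tail_gap[OF n] by blast
  define t1 where "t1 = stage_start t0 (Suc i)"
  have t0_t1: "t0 \<le> t1" unfolding t1_def by (rule le_stage_start)
  have cost_i: "real t1 \<le> real t0 + cost p" if "2 ^ i \<le> 2 * p" for p
    unfolding t1_def using that by (rule stage_start_le_cost)
  have t1_le: "t1 \<le> n_iter" using cost_i[OF size] budget by simp
  show thesis
  proof (cases "resid t1 \<le> lam * sigma")
    case True
    then show thesis using that(1) t0_t1 t1_le by blast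
  next
    case False
    have "stage_start t0 i \<le> n_iter" using t1_le stage_start_mono[of i "Suc i" t0] by (simp add: t1_def)
    then have "resid (stage_start t0 i) \<le> lam * sigma
        \<or> resid (stage_start t0 i) \<le> mu * (sigma + tail t0 (prev_size i))"
      by (rule resid_stage_start) (rule no_gap)
    moreover have "resid t1 \<le> resid (stage_start t0 i)" unfolding t1_def by (rule resid_antimono) simp
    ultimately have "resid (stage_start t0 i) \<le> mu * (sigma + tail t0 (prev_size i))"
      using False by linarith
    then have removed: "prev_size i < card (unchosen t0 - unchosen t1)"
      using last_stage_removes_support[OF gap] t1_le False by (simp add: t1_def)
    define p where "p = prev_size i + 1"
    have sub: "unchosen t1 \<subseteq> unchosen t0" by (rule unchosen_antimono[OF t0_t1])
    then have "card (unchosen t1) + p \<le> card (unchosen t0)"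
      using removed card_Diff_subset[OF finite_unchosen sub] card_mono[OF finite_unchosen sub]
      by (simp add: p_def)
    moreover have "real t1 \<le> real t0 + cost p"
      by (rule cost_i) (cases i, simp_all add: p_def prev_size_def)
    ultimately show thesis using that(2)[OF t0_t1, of p] by (simp add: p_def)
  qed
qed

lemma resid_n_iter_le_induct:
  "card (unchosen t0) \<le> n \<Longrightarrow> real t0 + cost n \<le> real n_iter \<Longrightarrow> resid n_iter \<le> lam * sigma"
proof (induction n arbitrary: t0 rule: less_induct)
  case (less n)
  have t0: "t0 \<le> n_iter" using less.prems(2) cost_nonneg[of n] by simp
  have budget: "real t0 + cost (card (unchosen t0)) \<le> real n_iter"
    using less.prems cost_mono by (meson add_left_mono order_trans)
  consider "resid t0 \<le> lam * sigma" | "card (unchosen t0) = 0" | "1 \<le> card (unchosen t0)" by linarith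
  then show ?case
  proof cases
    case 1
    then show ?thesis using resid_antimono[OF t0] by simp
  next
    case 2
    then have "resid t0 \<le> sigma" using resid_le_sigma_plus_unchosen[of t0] by (simp add: comb_def)
    also have "\<dots> \<le> lam * sigma" using lam sigma_nonneg by (simp add: mult_le_cancel_right1)
    finally show ?thesis using resid_antimono[OF t0] by simp
  next
    case 3
    then show ?thesis
    proof (rule phase[OF _ budget])
      fix t1 assume "t1 \<le> n_iter" "resid t1 \<le> lam * sigma"
      then show ?thesis using resid_antimono by (meson order_trans)
    next
      fix t1 p assume t1: "t0 \<le> t1" "1 \<le> p" "card (unchosen t1) + p \<le> card (unchosen t0)"
        "real t1 \<le> real t0 + cost p"
      define m where "m = card (unchosen t0) - p"
      have "cost p + cost m \<le> cost (card (unchosen t0))"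
        using cost_superadditive[of p m] t1(3) by (simp add: m_def)
      then have "real t1 + cost m \<le> real n_iter" using t1(4) budget by simp
      moreover have "m < n" using t1(2,3) less.prems(1) by (simp add: m_def)
      moreover have "card (unchosen t1) \<le> m" using t1(3) by (simp add: m_def)
      ultimately show ?thesis using less.IH by blast
    qed
  qed
qed

lemma resid_n_iter_le: "norm (f - G n_iter f) \<le> lam * norm (f - comb T)"
proof -
  have "unchosen 0 = T" by (simp add: unchosen_def chosen_def)
  moreover have "real 0 + cost (card T) \<le> real n_iter"
    using cost_mono[OF card_T] cost_N_le_n_iter by simp
  ultimately have "resid n_iter \<le> lam * sigma" by (intro resid_n_iter_le_induct[of 0]) simp_all
  then show ?thesis by (simp add: resid_def sigma_def)
qed

end

lemma wcga_lebesgue_inequality: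
  fixes sm :: "'k::real_normed_field \<Rightarrow> 'a::real_normed_vector \<Rightarrow> 'a"
    and \<phi> :: "'i \<Rightarrow> 'a" and G :: "nat \<Rightarrow> 'a \<Rightarrow> 'a"
  assumes "scalar_action sm" and "annihilating_norming sm"
    and hyp: "dictionary sm \<phi> \<and> 0 < \<tau> \<and> \<tau> \<le> 1 \<and> wcga sm \<phi> \<tau> G \<and>
        1 \<le> N \<and> N < D \<and> 0 < kN \<and>
        mono_on {0..} Q \<and> (\<forall>t\<ge>0. 0 \<le> Q t) \<and> (\<forall>t>0. 0 < Q t) \<and> Q 0 = 0 \<and>
        (\<forall>n\<ge>1. 0 < H n) \<and> mono_on {1..} H \<and>
        property_DQ sm \<phi> Q \<and> property_A1 sm \<phi> N kN D \<and> property_A3 sm \<phi> N H D \<and>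
        1 < lam1 \<and>
        quasi_convex1 (\<lambda>n. 1 / Q ((\<tau> / 2) * (1 - 1 / sqrt lam1) / H n)) \<and>
        real N + 8 * ln (8 * (1 + lam1) * kN / (sqrt lam1 - 1))
            * (1 / Q ((\<tau> / 2) * (1 - 1 / sqrt lam1) / H (2 * N))) < real D"
    and "\<Phi> \<in> SigmaN sm \<phi> N"
  shows "norm (x - G (nat \<lfloor>8 * ln (8 * (1 + lam1) * kN / (sqrt lam1 - 1))
                          * (1 / Q ((\<tau> / 2) * (1 - 1 / sqrt lam1) / H (2 * N)))\<rfloor>) x)
             \<le> lam1 * norm (x - \<Phi>)"
proof -
  obtain T c where T: "finite T" "card T \<le> N" "\<Phi> = (\<Sum>i\<in>T. sm (c i) (\<phi> i))"
    using assms(4) unfolding SigmaN_def by blast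
  have "G 0 x = 0" and "\<exists>ix. \<forall>n. (x - G n x = 0 \<longrightarrow> G (Suc n) x = x) \<and>
      (x - G n x \<noteq> 0 \<longrightarrow>
         (\<forall>F. norming sm (x - G n x) F \<longrightarrow>
            (\<forall>j. \<tau> * norm (F (\<phi> j)) \<le> norm (F (\<phi> (ix (Suc n)))))) \<and>
         G (Suc n) x \<in> kspan sm ((\<lambda>k. \<phi> (ix k)) ` {1..Suc n}) \<and>
         norm (x - G (Suc n) x) = infdist x (kspan sm ((\<lambda>k. \<phi> (ix k)) ` {1..Suc n})))"
    using hyp unfolding wcga_def by blast+
  then obtain ix where "wcga_lebesgue sm \<phi> \<tau> G x ix N D kN Q H lam1 T"
    using assms T(1,2) unfolding wcga_lebesgue_def wcga_lebesgue_axioms_def wcga_run_def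
      wcga_run_axioms_def dictionary_def by auto
  then interpret wcga_lebesgue sm \<phi> \<tau> G x ix N D kN Q H lam1 T c .
  show ?thesis
    using resid_n_iter_le unfolding n_iter_eq comb_def T(3) .
qed

theorem theorem1p1:
  shows "(uniformly_smooth TYPE('a::banach) \<longrightarrow>
      (\<forall>(\<phi>::'i \<Rightarrow> 'a) (\<tau>::real) (G::nat \<Rightarrow> 'a \<Rightarrow> 'a) (N::nat) (D::nat) (kN::real)
          (Q::real \<Rightarrow> real) (H::nat \<Rightarrow> real) (lam1::real).
        dictionary (scaleR :: real \<Rightarrow> 'a \<Rightarrow> 'a) \<phi> \<and> 0 < \<tau> \<and> \<tau> \<le> 1 \<and> wcga (scaleR :: real \<Rightarrow> 'a \<Rightarrow> 'a) \<phi> \<tau> G \<and>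
        1 \<le> N \<and> N < D \<and> 0 < kN \<and>
        mono_on {0..} Q \<and> (\<forall>t\<ge>0. 0 \<le> Q t) \<and> (\<forall>t>0. 0 < Q t) \<and> Q 0 = 0 \<and>
        (\<forall>n\<ge>1. 0 < H n) \<and> mono_on {1..} H \<and>
        property_DQ (scaleR :: real \<Rightarrow> 'a \<Rightarrow> 'a) \<phi> Q \<and> property_A1 (scaleR :: real \<Rightarrow> 'a \<Rightarrow> 'a) \<phi> N kN D \<and> property_A3 (scaleR :: real \<Rightarrow> 'a \<Rightarrow> 'a) \<phi> N H D \<and>
        1 < lam1 \<and>
        quasi_convex1 (\<lambda>n. 1 / Q ((\<tau> / 2) * (1 - 1 / sqrt lam1) / H n)) \<and>
        real N + 8 * ln (8 * (1 + lam1) * kN / (sqrt lam1 - 1))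
            * (1 / Q ((\<tau> / 2) * (1 - 1 / sqrt lam1) / H (2 * N))) < real D
        \<longrightarrow>
        (\<forall>x \<Phi>. \<Phi> \<in> SigmaN (scaleR :: real \<Rightarrow> 'a \<Rightarrow> 'a) \<phi> N \<longrightarrow>
           norm (x - G (nat \<lfloor>8 * ln (8 * (1 + lam1) * kN / (sqrt lam1 - 1))
                          * (1 / Q ((\<tau> / 2) * (1 - 1 / sqrt lam1) / H (2 * N)))\<rfloor>) x)
             \<le> lam1 * norm (x - \<Phi>)))
     ) \<and>
     (\<forall>sm :: complex \<Rightarrow> 'b::banach \<Rightarrow> 'b.
       normed_space_over sm \<and> uniformly_smooth TYPE('b) \<longrightarrow>
      (\<forall>(\<phi>::'j \<Rightarrow> 'b) (\<tau>::real) (G::nat \<Rightarrow> 'b \<Rightarrow> 'b) (N::nat) (D::nat) (kN::real)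
          (Q::real \<Rightarrow> real) (H::nat \<Rightarrow> real) (lam1::real).
        dictionary sm \<phi> \<and> 0 < \<tau> \<and> \<tau> \<le> 1 \<and> wcga sm \<phi> \<tau> G \<and>
        1 \<le> N \<and> N < D \<and> 0 < kN \<and>
        mono_on {0..} Q \<and> (\<forall>t\<ge>0. 0 \<le> Q t) \<and> (\<forall>t>0. 0 < Q t) \<and> Q 0 = 0 \<and>
        (\<forall>n\<ge>1. 0 < H n) \<and> mono_on {1..} H \<and>
        property_DQ sm \<phi> Q \<and> property_A1 sm \<phi> N kN D \<and> property_A3 sm \<phi> N H D \<and>
        1 < lam1 \<and>
        quasi_convex1 (\<lambda>n. 1 / Q ((\<tau> / 2) * (1 - 1 / sqrt lam1) / H n)) \<and>
        real N + 8 * ln (8 * (1 + lam1) * kN / (sqrt lam1 - 1))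
            * (1 / Q ((\<tau> / 2) * (1 - 1 / sqrt lam1) / H (2 * N))) < real D
        \<longrightarrow>
        (\<forall>x \<Phi>. \<Phi> \<in> SigmaN sm \<phi> N \<longrightarrow>
           norm (x - G (nat \<lfloor>8 * ln (8 * (1 + lam1) * kN / (sqrt lam1 - 1))
                          * (1 / Q ((\<tau> / 2) * (1 - 1 / sqrt lam1) / H (2 * N)))\<rfloor>) x)
             \<le> lam1 * norm (x - \<Phi>)))
     )"
  apply (intro conjI impI allI)
   apply (rule wcga_lebesgue_inequality[OF scalar_action_scaleR annihilating_norming_real]; assumption)
  apply (erule conjE)
  apply (rule wcga_lebesgue_inequality[OF _ annihilating_norming_complex];
      (unfold scalar_action_def)?; assumption)
  done

end
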